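(* In the setting below, for all $m,n\in\mathbb{Z}$: (1) The automorphism $w=T_1^mT_2^n$ satisfies $(w(\tau_0),w(\tau_1),w(\tau_2))=(\tau_{m,n},\tau_{m+1,n},\tau_{m+1,n+1})$ and $(w(\alpha_0),w(\alpha_1),w(\alpha_2))=(\alpha_0+3m,\alpha_1+3(n-m),\alpha_2-3n)$; the automorphism $w'=T_1^mT_2^ns_1$ satisfies $(w'(\tau_0),w'(\tau_1),w'(\tau_2))=(\tau_{m,n},\tau_{m,n+1},\tau_{m+1,n+1})$ and $(w'(\alpha_0),w'(\alpha_1),w'(\alpha_2))=(\alpha_0+\alpha_1+3n,-\alpha_1+3(m-n),\alpha_1+\alpha_2-3m)$. (2) With $\varphi_i:=\tau_{i+1}'/\tau_{i+1}-\tau_{i+2}'/\tau_{i+2}+x$, $$(w(\varphi_0),w(\varphi_1),w(\varphi_2))=\Big(\frac{\tau_{m,n}\tau_{m+2,n+1}}{\tau_{m+1,n}\tau_{m+1,n+1}},\ \frac{\tau_{m+1,n}\tau_{m,n+1}}{\tau_{m+1,n+1}\tau_{m,n}},\ \frac{\tau_{m+1,n+1}\tau_{m,n-1}}{\tau_{m,n}\tau_{m+1,n}}\Big),$$ $$(w'(\varphi_0),w'(\varphi_1),w'(\varphi_2))=\Big(\frac{\tau_{m,n}\tau_{m+1,n+2}}{\tau_{m,n+1}\tau_{m+1,n+1}},\ \frac{\tau_{m,n+1}\tau_{m+1,n}}{\tau_{m+1,n+1}\tau_{m,n}},\ \frac{\tau_{m+1,n+1}\tau_{m-1,n}}{\t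au_{m,n}\tau_{m,n+1}}\Big).$$
   Context: Indices mod 3. Let $L$ be the field of rational functions over $\mathbb{C}$ in independent indeterminates $\alpha_0,\alpha_1,x,\tau_0,\tau_1,\tau_2,\tau_0',\tau_1',\tau_2'$, with $\alpha_2:=3-\alpha_0-\alpha_1$ and derivation $'$: $\alpha_i'=0$, $x'=1$, $(\tau_i)'=\tau_i'$, $(\tau_i')'=\tau_i(F_i''+(F_i')^2)$ where $F_j'=\tau_j'/\tau_j$ and $F_i''=-x(F_{i+1}'-F_{i+2}')-(F_i'-F_{i+1}')(F_i'-F_{i+2}')-(\alpha_{i+1}-\alpha_{i+2})/3$. The extended affine Weyl group of type $A^{(1)}_2$ acts on $L$ by differential automorphisms $s_0,s_1,s_2,\pi$ with $s_i(x)=\pi(x)=x$, $s_i(\alpha_i)=-\alpha_i$, $s_i(\alpha_j)=\alpha_j+\alpha_i$ ($j\neq i$), $\pi(\alpha_j)=\alpha_{j+1}$, $s_i(\tau_i)=(\tau_{i+1}'\tau_{i+2}-\tau_{i+1}\tau_{i+2}'+x\tau_{i+1}\tau_{i+2})/\tau_i$, $s_i(\tau_j)=\tau_j$ ($j\ne i$), $\pi(\tau_j)=\tau_{j+1}$. Put $T_1=\pi s_2s_1$, $T_2=s_1\pi s_2$ (composition of automorphisms) and $\tau_{m,n}:=T_1^mT_2^n(\tau_0)\in L$ for $m,n\in\mathbb{Z}$. *)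

theory Defs
  imports Complex_Main "HOL-Library.Poly_Mapping" "HOL-Computational_Algebra.Fraction_Field"
begin

datatype var = Al0 | Al1 | Xv | T0 | T1 | T2 | U0 | U1 | U2
  (* alpha_0, alpha_1, x, tau_0, tau_1, tau_2, tau_0', tau_1', tau_2' *)

fun var_idx :: "var \<Rightarrow> nat" where
  "var_idx Al0 = 0" | "var_idx Al1 = 1" | "var_idx Xv = 2"
| "var_idx T0 = 3" | "var_idx T1 = 4" | "var_idx T2 = 5"
| "var_idx U0 = 6" | "var_idx U1 = 7" | "var_idx U2 = 8"

lemma var_idx_inj: "var_idx a = var_idx b \<Longrightarrow> a = b"
  by (cases a; cases b; simp)

instantiation var :: linorder
begin
definition less_eq_var :: "var \<Rightarrow> var \<Rightarrow> bool" where
  "less_eq_var a b \<longleftrightarrow> var_idx a \<le> var_idx b"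
definition less_var :: "var \<Rightarrow> var \<Rightarrow> bool" where
  "less_var a b \<longleftrightarrow> var_idx a < var_idx b"
instance
  by standard (auto simp: less_eq_var_def less_var_def intro: var_idx_inj)
end

lemma UNIV_var: "(UNIV :: var set) = {Al0, Al1, Xv, T0, T1, T2, U0, U1, U2}"
  by (auto intro: var.exhaust)

instance var :: finite
  by standard (simp add: UNIV_var)

type_synonym mono = "var \<Rightarrow>\<^sub>0 nat"
type_synonym mpoly = "mono \<Rightarrow>\<^sub>0 complex"
type_synonym L = "mpoly fract"

definition toL :: "mpoly \<Rightarrow> L" where "toL p = Fract p 1"

definition cL :: "complex \<Rightarrow> L" where
  "cL c = toL (Poly_Mapping.single 0 c)"

definition gen :: "var \<Rightarrow> L" where
  "gen v = toL (Poly_Mapping.single (Poly_Mapping.single v 1) 1)"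

definition xL :: L where "xL = gen Xv"

definition alpha :: "nat \<Rightarrow> L" where
  "alpha i = (if i mod 3 = 0 then gen Al0 else if i mod 3 = 1 then gen Al1
              else 3 - gen Al0 - gen Al1)"

definition tau :: "nat \<Rightarrow> L" where
  "tau i = (if i mod 3 = 0 then gen T0 else if i mod 3 = 1 then gen T1 else gen T2)"

definition taup :: "nat \<Rightarrow> L" where
  "taup i = (if i mod 3 = 0 then gen U0 else if i mod 3 = 1 then gen U1 else gen U2)"

definition rep :: "L \<Rightarrow> mpoly \<times> mpoly" where
  "rep f = (SOME (a, b). b \<noteq> 0 \<and> f = Fract a b)"

definition Fp :: "nat \<Rightarrow> L" where "Fp j = taup j / tau j"

definition Fpp :: "nat \<Rightarrow> L" where
  "Fpp i = - xL * (Fp (i+1) - Fp (i+2)) - (Fp i - Fp (i+1)) * (Fp i - Fp (i+2))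
           - (alpha (i+1) - alpha (i+2)) / 3"

fun dgen :: "var \<Rightarrow> L" where
  "dgen Al0 = 0" | "dgen Al1 = 0" | "dgen Xv = 1"
| "dgen T0 = taup 0" | "dgen T1 = taup 1" | "dgen T2 = taup 2"
| "dgen U0 = tau 0 * (Fpp 0 + (Fp 0)^2)"
| "dgen U1 = tau 1 * (Fpp 1 + (Fp 1)^2)"
| "dgen U2 = tau 2 * (Fpp 2 + (Fp 2)^2)"

definition coeffm :: "mpoly \<Rightarrow> mono \<Rightarrow> complex" where "coeffm p m = Poly_Mapping.lookup p m"
definition expo :: "mono \<Rightarrow> var \<Rightarrow> nat" where "expo m v = Poly_Mapping.lookup m v"

definition pder :: "mpoly \<Rightarrow> L" where
  "pder p = (\<Sum>m::mono\<in>Poly_Mapping.keys p. cL (coeffm p m) *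
      (\<Sum>v::var\<in>UNIV. of_nat (expo m v) *
          (\<Prod>w::var\<in>UNIV. gen w ^ (if w = v then expo m w - 1 else expo m w)) * dgen v))"

definition D :: "L \<Rightarrow> L" where
  "D f = (case rep f of (a, b) \<Rightarrow> (pder a * toL b - toL a * pder b) / (toL b)^2)"

definition peval :: "(var \<Rightarrow> L) \<Rightarrow> mpoly \<Rightarrow> L" where
  "peval \<sigma> p = (\<Sum>m::mono\<in>Poly_Mapping.keys p. cL (coeffm p m) * (\<Prod>v::var\<in>UNIV. \<sigma> v ^ expo m v))"

definition fsubst :: "(var \<Rightarrow> L) \<Rightarrow> L \<Rightarrow> L" where
  "fsubst \<sigma> f = (case rep f of (a, b) \<Rightarrow> peval \<sigma> a / peval \<sigma> b)"

definition mk_aut :: "(nat \<Rightarrow> L) \<Rightarrow> (nat \<Rightarrow> L) \<Rightarrow> L \<Rightarrow> L" where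
  "mk_aut a t = fsubst (\<lambda>v. case v of Al0 \<Rightarrow> a 0 | Al1 \<Rightarrow> a 1 | Xv \<Rightarrow> xL
      | T0 \<Rightarrow> t 0 | T1 \<Rightarrow> t 1 | T2 \<Rightarrow> t 2
      | U0 \<Rightarrow> D (t 0) | U1 \<Rightarrow> D (t 1) | U2 \<Rightarrow> D (t 2))"

definition s :: "nat \<Rightarrow> L \<Rightarrow> L" where
  "s i = mk_aut
     (\<lambda>j. if j mod 3 = i mod 3 then - alpha j else alpha j + alpha i)
     (\<lambda>j. if j mod 3 = i mod 3
          then (taup (i+1) * tau (i+2) - tau (i+1) * taup (i+2) + xL * tau (i+1) * tau (i+2)) / tau i
          else tau j)"

definition pi :: "L \<Rightarrow> L" where
  "pi = mk_aut (\<lambda>j. alpha (j+1)) (\<lambda>j. tau (j+1))"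

definition Tr1 :: "L \<Rightarrow> L" where "Tr1 = pi \<circ> s 2 \<circ> s 1"
definition Tr2 :: "L \<Rightarrow> L" where "Tr2 = s 1 \<circ> pi \<circ> s 2"

definition zpow :: "(L \<Rightarrow> L) \<Rightarrow> int \<Rightarrow> L \<Rightarrow> L" where
  "zpow f k = (if 0 \<le> k then f ^^ nat k else (inv f) ^^ nat (- k))"

definition wmn :: "int \<Rightarrow> int \<Rightarrow> L \<Rightarrow> L" where
  "wmn m n = zpow Tr1 m \<circ> zpow Tr2 n"

definition taumn :: "int \<Rightarrow> int \<Rightarrow> L" where
  "taumn m n = wmn m n (tau 0)"

definition phi :: "nat \<Rightarrow> L" where
  "phi i = taup (i+1) / tau (i+1) - taup (i+2) / tau (i+2) + xL"

end

theory Submission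
  imports Defs
begin

(* The group acts on L by differential automorphisms, and such an automorphism is determined by
   its values on alpha_0, alpha_1, x, tau_0, tau_1, tau_2.  Hence the relations
   s_i^2 = pi^3 = 1, pi s_i = s_(i+1) pi and s_0 s_1 s_0 = s_1 s_0 s_1 are finite computations,
   and they make T_1, T_2 commuting automorphisms with explicit inverses.  Each of tau_1, tau_2,
   s_i(tau_i) and s_1 s_i(tau_i) is tau_0 moved by a short word in T_1, T_2 (for instance
   tau_1 = T_1 tau_0 and s_1(tau_1) = T_2 tau_0), so T_1^m T_2^n maps it to tau_(m',n') with
   shifted indices; the identity phi_i = s_i(tau_i) tau_i / (tau_(i+1) tau_(i+2)) turns this into
   the formulas for phi_i, and T_1, T_2 act on the alpha_j by translations by 3.
   The substantial point is that the substitutions defining s_i and pi extend to automorphisms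
   of the rational function field: no nonzero polynomial is mapped to 0, because the inverse
   substitution can already be evaluated on the images of the generators. *)

section \<open>Polynomials inside L\<close>

instance fract :: ("{idom,ring_char_0}") ring_char_0
proof
  show "inj (of_nat :: nat \<Rightarrow> 'a fract)"
    by (auto simp: inj_on_def of_nat_fract eq_fract)
qed

lemma toL_add: "toL (a + b) = toL a + toL b" by (simp add: toL_def)
lemma toL_mult: "toL (a * b) = toL a * toL b" by (simp add: toL_def)
lemma toL_minus: "toL (- a) = - toL a" by (simp add: toL_def)
lemma toL_diff: "toL (a - b) = toL a - toL b" by (simp add: toL_def)
lemma toL_0: "toL 0 = 0" by (simp add: toL_def fract_collapse)
lemma toL_1: "toL 1 = 1" by (simp add: toL_def fract_collapse)
lemma toL_eq_0_iff: "toL a = 0 \<longleftrightarrow> a = 0"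
  by (simp add: toL_def Zero_fract_def eq_fract)
lemma toL_inj: "toL a = toL b \<Longrightarrow> a = b"
  by (metis toL_diff toL_eq_0_iff eq_iff_diff_eq_0)
lemma toL_power: "toL (a ^ n) = toL a ^ n"
  by (induct n) (simp_all add: toL_1 toL_mult)
lemma toL_prod: "toL (prod f A) = (\<Prod>x\<in>A. toL (f x))"
  by (induct A rule: infinite_finite_induct) (simp_all add: toL_1 toL_mult)

lemma Fract_eq_toL_divide: "b \<noteq> 0 \<Longrightarrow> Fract a b = toL a / toL b"
  by (simp add: toL_def eq_fract)

lemma toL_divide_cases: obtains a b where "b \<noteq> 0" "f = toL a / toL b"
  by (cases f) (auto simp: Fract_eq_toL_divide)

lemma rep_toL_divide: "rep f = (a, b) \<Longrightarrow> b \<noteq> 0 \<and> f = toL a / toL b"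
proof -
  obtain a0 b0 where "b0 \<noteq> 0" "f = Fract a0 b0" by (cases f) simp
  then have "\<exists>x. case x of (a, b) \<Rightarrow> b \<noteq> 0 \<and> f = Fract a b" by (intro exI[of _ "(a0, b0)"]) simp
  then have "case rep f of (a, b) \<Rightarrow> b \<noteq> 0 \<and> f = Fract a b"
    unfolding rep_def by (rule someI_ex)
  then show "rep f = (a, b) \<Longrightarrow> b \<noteq> 0 \<and> f = toL a / toL b"
    by (auto simp: Fract_eq_toL_divide)
qed

lemma toL_const: "toL (Poly_Mapping.single 0 c) = cL c" by (simp add: cL_def)
lemma cL_add: "cL (a + b) = cL a + cL b" by (simp add: cL_def single_add toL_add)
lemma cL_mult: "cL (a * b) = cL a * cL b" by (simp add: cL_def toL_mult[symmetric] mult_single)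
lemma cL_0 [simp]: "cL 0 = 0" by (simp add: cL_def toL_0)
lemma cL_1 [simp]: "cL 1 = 1" by (simp add: cL_def toL_1)
lemma cL_of_nat: "cL (of_nat k) = of_nat k" by (induct k) (simp_all add: cL_add)
lemma cL_numeral: "cL (numeral k) = numeral k"
  using cL_of_nat[of "numeral k"] by simp
lemma cL_of_int: "cL (of_int k) = of_int k"
proof (cases k rule: int_cases)
  case (nonneg n) then show ?thesis by (simp add: cL_of_nat)
next
  case (neg n)
  have "cL (- of_nat (Suc n)) = - cL (of_nat (Suc n))"
    using cL_add[of "- of_nat (Suc n)" "of_nat (Suc n)"] by (simp add: eq_neg_iff_add_eq_0)
  then show ?thesis using neg cL_of_nat[of "Suc n"] by simp
qed
lemma toL_numeral: "toL (numeral k) = numeral k"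
  using toL_const[of "numeral k"] cL_numeral[of k] by simp

lemma poly_mapping_single_induct [case_names zero single add]:
  assumes "P 0" "\<And>m c. P (Poly_Mapping.single m c)" "\<And>p q. P p \<Longrightarrow> P q \<Longrightarrow> P (p + q)"
  shows "P (p :: 'a \<Rightarrow>\<^sub>0 'b::monoid_add)"
proof (induct p rule: update_induct)
  case const then show ?case using assms(1) .
next
  case (update f a b)
  have "Poly_Mapping.update a b f = f + Poly_Mapping.single a b"
    using update(1) by (intro poly_mapping_eqI)
      (auto simp: lookup_update lookup_add lookup_single in_keys_iff when_def)
  then show ?case using assms(2,3) update(3) by metis
qed

definition mono_eval :: "(var \<Rightarrow> L) \<Rightarrow> mono \<Rightarrow> L" where
  "mono_eval \<sigma> m = (\<Prod>v\<in>UNIV. \<sigma> v ^ Poly_Mapping.lookup m v)"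

lemma mono_eval_0 [simp]: "mono_eval \<sigma> 0 = 1"
  by (simp add: mono_eval_def)

lemma mono_eval_add: "mono_eval \<sigma> (m1 + m2) = mono_eval \<sigma> m1 * mono_eval \<sigma> m2"
  by (simp add: mono_eval_def lookup_add power_add prod.distrib)

lemma mono_eval_single: "mono_eval \<sigma> (Poly_Mapping.single v 1) = \<sigma> v"
proof -
  have "mono_eval \<sigma> (Poly_Mapping.single v 1) = (\<Prod>w\<in>UNIV. if w = v then \<sigma> v else 1)"
    unfolding mono_eval_def by (rule prod.cong) (auto simp: lookup_single when_def)
  then show ?thesis by simp
qed

lemma peval_eq_sum: "peval \<sigma> p = (\<Sum>m\<in>Poly_Mapping.keys p. cL (Poly_Mapping.lookup p m) * mono_eval \<sigma> m)"
  by (simp add: peval_def coeffm_def expo_def mono_eval_def)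

lemma peval_0 [simp]: "peval \<sigma> 0 = 0"
  by (simp add: peval_eq_sum)

lemma peval_single: "peval \<sigma> (Poly_Mapping.single m c) = cL c * mono_eval \<sigma> m"
  by (simp add: peval_eq_sum)

lemma peval_1 [simp]: "peval \<sigma> 1 = 1"
  using peval_single[of \<sigma> 0 1] by simp

lemma peval_add: "peval \<sigma> (p + q) = peval \<sigma> p + peval \<sigma> q"
  unfolding peval_eq_sum
  by (rule setsum_keys_plus_distrib) (simp_all add: cL_add distrib_right)

lemma peval_mult: "peval \<sigma> (p * q) = peval \<sigma> p * peval \<sigma> q"
proof (induct p rule: poly_mapping_single_induct)
  case (single m c)
  show ?case
    by (induct q rule: poly_mapping_single_induct)
       (simp_all add: mult_single peval_single mono_eval_add cL_mult distrib_left peval_add)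
qed (simp_all add: distrib_right peval_add)

lemma peval_minus: "peval \<sigma> (- p) = - peval \<sigma> p"
  using peval_add[of \<sigma> "- p" p] by (simp add: eq_neg_iff_add_eq_0)

definition var_poly :: "var \<Rightarrow> mpoly" where
  "var_poly v = Poly_Mapping.single (Poly_Mapping.single v 1) 1"

lemma gen_eq_toL: "gen v = toL (var_poly v)"
  by (simp add: gen_def var_poly_def)

lemma peval_var_poly: "peval \<sigma> (var_poly v) = \<sigma> v"
  unfolding var_poly_def peval_single mono_eval_single by simp

lemma toL_single: "toL (Poly_Mapping.single m c) = cL c * mono_eval gen m"
proof -
  have var_poly_power: "var_poly v ^ k = Poly_Mapping.single (Poly_Mapping.single v k) 1" for v k
    by (induct k) (simp_all add: var_poly_def mult_single single_add[symmetric] add.commute)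
  have prod_single: "(\<Prod>v\<in>A. Poly_Mapping.single (f v) (1::complex)) = Poly_Mapping.single (\<Sum>v\<in>A. f v) 1"
    if "finite A" for A and f :: "var \<Rightarrow> mono"
    using that by (induct A rule: finite_induct) (simp_all add: mult_single)
  have "(\<Sum>v\<in>UNIV. Poly_Mapping.single v (Poly_Mapping.lookup m v)) = m"
    by (rule poly_mapping_eqI) (simp add: lookup_sum lookup_single when_def)
  then have "Poly_Mapping.single m c
      = Poly_Mapping.single 0 c * (\<Prod>v\<in>UNIV. var_poly v ^ Poly_Mapping.lookup m v)"
    by (simp add: var_poly_power prod_single mult_single)
  then show ?thesis
    by (simp add: toL_mult toL_prod toL_power toL_const mono_eval_def gen_eq_toL)
qed

lemma toL_eq_peval_gen: "toL p = peval gen p"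
  by (induct p rule: poly_mapping_single_induct)
     (simp_all add: toL_0 toL_add peval_add toL_single peval_single)

lemma gen_nonzero: "gen v \<noteq> 0"
proof -
  have "Poly_Mapping.lookup (var_poly v) (Poly_Mapping.single v 1) \<noteq> 0"
    by (simp add: var_poly_def)
  then show ?thesis
    by (auto simp: gen_eq_toL toL_eq_0_iff)
qed

section \<open>The derivation\<close>

definition mono_deriv :: "mono \<Rightarrow> L" where
  "mono_deriv m = (\<Sum>v\<in>UNIV. of_nat (Poly_Mapping.lookup m v) *
     (\<Prod>w\<in>UNIV. gen w ^ (if w = v then Poly_Mapping.lookup m w - 1 else Poly_Mapping.lookup m w))
       * dgen v)"

lemma pder_eq_sum: "pder p = (\<Sum>m\<in>Poly_Mapping.keys p. cL (Poly_Mapping.lookup p m) * mono_deriv m)"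
  unfolding pder_def coeffm_def expo_def mono_deriv_def ..

lemma pder_0 [simp]: "pder 0 = 0"
  by (simp add: pder_eq_sum)

lemma pder_single: "pder (Poly_Mapping.single m c) = cL c * mono_deriv m"
  by (simp add: pder_eq_sum)

lemma pder_add: "pder (p + q) = pder p + pder q"
  unfolding pder_eq_sum
  by (rule setsum_keys_plus_distrib) (simp_all add: cL_add distrib_right)

lemma mono_deriv_add:
  "mono_deriv (m1 + m2) = mono_deriv m1 * mono_eval gen m2 + mono_eval gen m1 * mono_deriv m2"
proof -
  have prod_if: "(\<Prod>w\<in>UNIV. (g w :: L) ^ (if w = v then k w else e w))
      = g v ^ k v * (\<Prod>w\<in>UNIV - {v}. g w ^ e w)" for g k e and v :: var
    by (subst prod.remove[of _ v]) (auto intro!: prod.cong)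
  have mono_eval_split: "mono_eval g m
      = g v ^ Poly_Mapping.lookup m v * (\<Prod>w\<in>UNIV - {v}. g w ^ Poly_Mapping.lookup m w)" for g m v
    unfolding mono_eval_def by (rule prod.remove) auto
  have "of_nat (Poly_Mapping.lookup (m1 + m2) v) *
      (\<Prod>w\<in>UNIV. gen w ^ (if w = v then Poly_Mapping.lookup (m1 + m2) w - 1
                           else Poly_Mapping.lookup (m1 + m2) w)) * dgen v
    = of_nat (Poly_Mapping.lookup m1 v) *
      (\<Prod>w\<in>UNIV. gen w ^ (if w = v then Poly_Mapping.lookup m1 w - 1 else Poly_Mapping.lookup m1 w))
        * dgen v * mono_eval gen m2
    + mono_eval gen m1 * (of_nat (Poly_Mapping.lookup m2 v) *
      (\<Prod>w\<in>UNIV. gen w ^ (if w = v then Poly_Mapping.lookup m2 w - 1 else Poly_Mapping.lookup m2 w))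
        * dgen v)" for v
  proof -
    have split_add: "(\<Prod>w\<in>UNIV - {v}. gen w ^ Poly_Mapping.lookup (m1 + m2) w)
        = (\<Prod>w\<in>UNIV - {v}. gen w ^ Poly_Mapping.lookup m1 w)
        * (\<Prod>w\<in>UNIV - {v}. gen w ^ Poly_Mapping.lookup m2 w)"
      by (simp add: lookup_add power_add prod.distrib)
    show ?thesis
      unfolding prod_if mono_eval_split[of gen m1 v] mono_eval_split[of gen m2 v]
        split_add[unfolded lookup_add] lookup_add
      by (cases "Poly_Mapping.lookup m1 v"; cases "Poly_Mapping.lookup m2 v")
         (simp_all add: algebra_simps power_add)
  qed
  then show ?thesis
    unfolding mono_deriv_def by (simp add: sum_distrib_left sum_distrib_right sum.distrib)
qed

lemma pder_mult: "pder (p * q) = pder p * toL q + toL p * pder q"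
proof (induct p rule: poly_mapping_single_induct)
  case (single m c)
  show ?case
    by (induct q rule: poly_mapping_single_induct)
       (simp_all add: toL_0 mult_single pder_single mono_deriv_add cL_mult toL_single
         distrib_left distrib_right pder_add toL_add algebra_simps)
qed (simp_all add: toL_0 distrib_right distrib_left pder_add toL_add)

text \<open>The representative chosen by \<^const>\<open>rep\<close> is irrelevant: \<^const>\<open>D\<close> is the quotient rule
  applied to any fraction.\<close>

lemma D_toL_divide:
  assumes b: "b \<noteq> 0"
  shows "D (toL a / toL b) = (pder a * toL b - toL a * pder b) / (toL b)^2"
proof -
  obtain a' b' where r: "rep (toL a / toL b) = (a', b')" by (cases "rep (toL a / toL b)")
  then have b': "b' \<noteq> 0" and eq: "toL a / toL b = toL a' / toL b'"
    by (auto dest: rep_toL_divide)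
  have nz: "toL b \<noteq> 0" "toL b' \<noteq> 0" using b b' by (simp_all add: toL_eq_0_iff)
  have cross: "toL a' * toL b = toL a * toL b'" using eq nz by (simp add: field_simps)
  then have "a' * b = a * b'" by (metis toL_mult toL_inj)
  then have "pder a' * toL b + toL a' * pder b = pder a * toL b' + toL a * pder b'"
    using pder_mult[of a' b] pder_mult[of a b'] by simp
  then have "(pder a' * toL b' - toL a' * pder b') * (toL b)^2
      = (pder a * toL b - toL a * pder b) * (toL b')^2"
    using cross by algebra
  then show ?thesis using r nz by (simp add: D_def field_simps)
qed

lemma D_toL: "D (toL p) = pder p"
  using D_toL_divide[of 1 p] by (simp add: toL_1 pder_single[of 0 1, simplified] mono_deriv_def)

lemma D_add: "D (f + g) = D f + D g"
proof -
  obtain a b where ab: "b \<noteq> 0" "f = toL a / toL b" by (rule toL_divide_cases)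
  obtain c d where cd: "d \<noteq> 0" "g = toL c / toL d" by (rule toL_divide_cases)
  have nz: "toL b \<noteq> 0" "toL d \<noteq> 0" using ab cd by (simp_all add: toL_eq_0_iff)
  have "f + g = toL (a * d + c * b) / toL (b * d)"
    using ab cd nz by (simp add: toL_add toL_mult field_simps)
  then have Dfg: "D (f + g) = (pder (a * d + c * b) * toL (b * d) - toL (a * d + c * b) * pder (b * d))
      / (toL (b * d))^2"
    using ab cd by (simp add: D_toL_divide)
  have Df: "D f = (pder a * toL b - toL a * pder b) / (toL b)^2" using ab by (simp add: D_toL_divide)
  have Dg: "D g = (pder c * toL d - toL c * pder d) / (toL d)^2" using cd by (simp add: D_toL_divide)
  show ?thesis
    unfolding Dfg Df Dg using ab cd nz
    by (simp add: pder_add pder_mult toL_add toL_mult field_simps)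
       (simp add: algebra_simps power2_eq_square)
qed

lemma D_mult: "D (f * g) = D f * g + f * D g"
proof -
  obtain a b where ab: "b \<noteq> 0" "f = toL a / toL b" by (rule toL_divide_cases)
  obtain c d where cd: "d \<noteq> 0" "g = toL c / toL d" by (rule toL_divide_cases)
  have nz: "toL b \<noteq> 0" "toL d \<noteq> 0" using ab cd by (simp_all add: toL_eq_0_iff)
  have "f * g = toL (a * c) / toL (b * d)"
    using ab cd by (simp add: toL_mult)
  then have Dfg: "D (f * g) = (pder (a * c) * toL (b * d) - toL (a * c) * pder (b * d)) / (toL (b * d))^2"
    using ab cd by (simp add: D_toL_divide)
  have Df: "D f = (pder a * toL b - toL a * pder b) / (toL b)^2" using ab by (simp add: D_toL_divide)
  have Dg: "D g = (pder c * toL d - toL c * pder d) / (toL d)^2" using cd by (simp add: D_toL_divide)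
  show ?thesis
    unfolding Dfg Df Dg using nz
    by (simp add: ab(2) cd(2) pder_mult toL_mult field_simps)
       (simp add: algebra_simps eval_nat_numeral)
qed

lemma D_0 [simp]: "D 0 = 0"
  using D_toL[of 0] by (simp add: toL_0)

lemma D_cL [simp]: "D (cL c) = 0"
  by (simp add: cL_def D_toL pder_single mono_deriv_def)

lemma D_1 [simp]: "D 1 = 0"
  using D_cL[of 1] by simp

lemma D_numeral [simp]: "D (numeral k) = 0"
  using D_cL[of "numeral k"] by (simp add: cL_numeral)

lemma D_minus: "D (- f) = - D f"
  using D_add[of "- f" f] by (simp add: eq_neg_iff_add_eq_0)

lemma D_diff: "D (f - g) = D f - D g"
  using D_add[of f "- g"] D_minus[of g] by simp

lemma D_divide: "D (f / g) = (D f * g - f * D g) / g^2"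
proof (cases "g = 0")
  case False
  have "D f = D ((f / g) * g)" using False by simp
  also have "\<dots> = D (f / g) * g + (f / g) * D g" by (rule D_mult)
  finally show ?thesis using False by (simp add: field_simps power2_eq_square)
qed simp

lemma D_power: "D (f ^ n) = of_nat n * f ^ (n - 1) * D f"
proof (induct n)
  case (Suc n)
  then show ?case by (cases n) (simp_all add: D_mult algebra_simps)
qed simp

lemma D_gen: "D (gen v) = dgen v"
proof -
  have "mono_deriv (Poly_Mapping.single v 1) = (\<Sum>u\<in>UNIV. if u = v then dgen v else 0)"
    unfolding mono_deriv_def
    by (rule sum.cong) (auto simp: lookup_single when_def intro!: prod.neutral)
  then show ?thesis
    unfolding gen_def D_toL pder_single by simp
qed

section \<open>The symmetric form of Painleve IV in L\<close>

declare One_nat_def [simp del]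

lemma tau_cong: "i mod 3 = j mod 3 \<Longrightarrow> tau i = tau j" by (simp add: tau_def)
lemma taup_cong: "i mod 3 = j mod 3 \<Longrightarrow> taup i = taup j" by (simp add: taup_def)
lemma alpha_cong: "i mod 3 = j mod 3 \<Longrightarrow> alpha i = alpha j" by (simp add: alpha_def)
lemma Fp_cong: "i mod 3 = j mod 3 \<Longrightarrow> Fp i = Fp j" by (simp add: Fp_def tau_def taup_def)

lemma Fpp_cong:
  assumes "i mod 3 = j mod 3" shows "Fpp i = Fpp j"
proof -
  have "(i + 1) mod 3 = (j + 1) mod 3" "(i + 2) mod 3 = (j + 2) mod 3"
    using assms by (metis mod_add_left_eq)+
  then show ?thesis unfolding Fpp_def using assms by (metis Fp_cong alpha_cong)
qed

lemma phi_cong: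
  assumes "i mod 3 = j mod 3" shows "phi i = phi j"
proof -
  have "(i + 1) mod 3 = (j + 1) mod 3" "(i + 2) mod 3 = (j + 2) mod 3"
    using assms by (metis mod_add_left_eq)+
  then show ?thesis unfolding phi_def by (metis tau_cong taup_cong)
qed

lemma index_mod3_numerals:
  "tau 3 = tau 0" "tau 4 = tau 1" "tau 5 = tau 2" "tau 6 = tau 0"
  "taup 3 = taup 0" "taup 4 = taup 1" "taup 5 = taup 2" "taup 6 = taup 0"
  "alpha 3 = alpha 0" "alpha 4 = alpha 1" "alpha 5 = alpha 2" "alpha 6 = alpha 0"
  "Fp 3 = Fp 0" "Fp 4 = Fp 1" "Fp 5 = Fp 2" "Fp 6 = Fp 0"
  "Fpp 3 = Fpp 0" "Fpp 4 = Fpp 1" "Fpp 5 = Fpp 2"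
  "phi 3 = phi 0" "phi 4 = phi 1" "phi 5 = phi 2"
  by (simp_all add: tau_def taup_def alpha_def Fp_def) (rule Fpp_cong phi_cong; simp)+

lemma index_plus3 [simp]:
  "tau (Suc (Suc (Suc i))) = tau i" "taup (Suc (Suc (Suc i))) = taup i"
  "alpha (Suc (Suc (Suc i))) = alpha i" "Fp (Suc (Suc (Suc i))) = Fp i"
  "Fpp (Suc (Suc (Suc i))) = Fpp i" "phi (Suc (Suc (Suc i))) = phi i"
  "tau (i + 3) = tau i" "taup (i + 3) = taup i" "alpha (i + 3) = alpha i"
  "Fp (i + 3) = Fp i" "Fpp (i + 3) = Fpp i" "phi (i + 3) = phi i"
proof -
  have mod3: "Suc (Suc (Suc i)) mod 3 = i mod 3" "(i + 3) mod 3 = i mod 3" by presburger+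
  show
    "tau (Suc (Suc (Suc i))) = tau i" "taup (Suc (Suc (Suc i))) = taup i"
    "alpha (Suc (Suc (Suc i))) = alpha i" "Fp (Suc (Suc (Suc i))) = Fp i"
    "Fpp (Suc (Suc (Suc i))) = Fpp i" "phi (Suc (Suc (Suc i))) = phi i"
    "tau (i + 3) = tau i" "taup (i + 3) = taup i" "alpha (i + 3) = alpha i"
    "Fp (i + 3) = Fp i" "Fpp (i + 3) = Fpp i" "phi (i + 3) = phi i"
    by (rule tau_cong taup_cong alpha_cong Fp_cong Fpp_cong phi_cong; simp only: mod3)+
qed

lemma index_Suc_numerals [simp]:
  "tau (Suc 0) = tau 1" "taup (Suc 0) = taup 1" "alpha (Suc 0) = alpha 1"
  "Fp (Suc 0) = Fp 1" "Fpp (Suc 0) = Fpp 1" "phi (Suc 0) = phi 1"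
  "tau (Suc (Suc 0)) = tau 2" "taup (Suc (Suc 0)) = taup 2" "alpha (Suc (Suc 0)) = alpha 2"
  "Fp (Suc (Suc 0)) = Fp 2" "Fpp (Suc (Suc 0)) = Fpp 2" "phi (Suc (Suc 0)) = phi 2"
  by (simp_all add: numeral_2_eq_2 One_nat_def)

lemma mod3_cases: obtains "(i::nat) mod 3 = 0" | "i mod 3 = 1" | "i mod 3 = 2"
proof -
  have "i mod 3 < 3" by simp
  then show ?thesis using that by linarith
qed

lemma tau_nonzero: "tau j \<noteq> 0"
  by (simp add: tau_def gen_nonzero)

lemma alpha_eq_gen: "alpha 0 = gen Al0" "alpha 1 = gen Al1" "alpha 2 = 3 - gen Al0 - gen Al1"
  by (simp_all add: alpha_def)

lemma alpha_sum: "alpha 0 + alpha 1 + alpha 2 = 3"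
  by (simp add: alpha_def)

lemma alpha_2_eq: "alpha 2 = 3 - alpha 0 - alpha 1"
  by (simp add: alpha_def)

lemma alpha_nonzero: "alpha j \<noteq> 0"
proof -
  have "alpha 2 \<noteq> 0"
  proof
    let ?p = "3 - var_poly Al0 - var_poly Al1"
    assume "alpha 2 = 0"
    then have "toL ?p = 0"
      by (simp add: alpha_eq_gen toL_diff gen_eq_toL toL_numeral)
    then have "Poly_Mapping.lookup ?p 0 = 0" by (simp add: toL_eq_0_iff)
    moreover have "Poly_Mapping.single Al0 (1::nat) \<noteq> 0" "Poly_Mapping.single Al1 (1::nat) \<noteq> 0"
      by (metis lookup_single_eq lookup_zero one_neq_zero)+
    ultimately show False by (simp add: var_poly_def lookup_minus lookup_single lookup_numeral)
  qed
  then show ?thesis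
    by (cases j rule: mod3_cases) (simp_all add: alpha_def gen_nonzero)
qed

lemma D_tau: "D (tau j) = taup j"
  by (cases j rule: mod3_cases) (simp_all add: tau_def taup_def D_gen)

lemma D_taup: "D (taup j) = tau j * (Fpp j + (Fp j)^2)"
proof -
  have D_taup_012: "D (taup 0) = tau 0 * (Fpp 0 + (Fp 0)^2)" "D (taup 1) = tau 1 * (Fpp 1 + (Fp 1)^2)"
    "D (taup 2) = tau 2 * (Fpp 2 + (Fp 2)^2)"
  proof -
    have "taup 0 = gen U0" "taup 1 = gen U1" "taup 2 = gen U2" by (simp_all add: taup_def)
    then show "D (taup 0) = tau 0 * (Fpp 0 + (Fp 0)^2)" "D (taup 1) = tau 1 * (Fpp 1 + (Fp 1)^2)"
      "D (taup 2) = tau 2 * (Fpp 2 + (Fp 2)^2)" by (simp_all only: D_gen dgen.simps)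
  qed
  have "tau j = tau (j mod 3)" "Fp j = Fp (j mod 3)" "Fpp j = Fpp (j mod 3)" "taup j = taup (j mod 3)"
    by (rule tau_cong Fp_cong Fpp_cong taup_cong; simp)+
  then show ?thesis by (cases j rule: mod3_cases) (simp_all only: D_taup_012)
qed

lemma D_xL [simp]: "D xL = 1"
  by (simp add: xL_def D_gen)

lemma D_alpha [simp]: "D (alpha j) = 0"
  by (simp add: alpha_def D_gen D_diff)

lemma D_Fp: "D (Fp j) = Fpp j"
  using tau_nonzero[of j] by (simp add: Fp_def D_divide D_tau D_taup field_simps power2_eq_square)

lemma phi_eq_Fp: "phi i = Fp (i + 1) - Fp (i + 2) + xL"
  by (simp add: phi_def Fp_def)

lemma phi_plus1_eq_Fp: "phi (i + 1) = Fp (i + 2) - Fp i + xL"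
proof -
  have "Fp (i + 1 + 1) = Fp (i + 2)" "Fp (i + 1 + 2) = Fp i" by (rule Fp_cong; presburger)+
  then show ?thesis using phi_eq_Fp[of "i + 1"] by simp
qed

lemma phi_plus2_eq_Fp: "phi (i + 2) = Fp i - Fp (i + 1) + xL"
proof -
  have "Fp (i + 2 + 1) = Fp i" "Fp (i + 2 + 2) = Fp (i + 1)" by (rule Fp_cong; presburger)+
  then show ?thesis using phi_eq_Fp[of "i + 2"] by simp
qed

lemma Fpp_012:
  "Fpp 0 = - xL * (Fp 1 - Fp 2) - (Fp 0 - Fp 1) * (Fp 0 - Fp 2) - (alpha 1 - alpha 2) / 3"
  "Fpp 1 = - xL * (Fp 2 - Fp 0) - (Fp 1 - Fp 2) * (Fp 1 - Fp 0) - (alpha 2 - alpha 0) / 3"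
  "Fpp 2 = - xL * (Fp 0 - Fp 1) - (Fp 2 - Fp 0) * (Fp 2 - Fp 1) - (alpha 0 - alpha 1) / 3"
  by (simp_all add: Fpp_def index_mod3_numerals)

lemma phi_012: "phi 0 = Fp 1 - Fp 2 + xL" "phi 1 = Fp 2 - Fp 0 + xL" "phi 2 = Fp 0 - Fp 1 + xL"
  by (simp_all add: phi_eq_Fp index_mod3_numerals)

lemma D_phi: "D (phi i) = phi i * (phi (i + 2) - phi (i + 1)) + alpha i"
proof -
  have D_phi_012:
    "D (phi 0) = phi 0 * (phi 2 - phi 1) + alpha 0"
    "D (phi 1) = phi 1 * (phi 0 - phi 2) + alpha 1"
    "D (phi 2) = phi 2 * (phi 1 - phi 0) + alpha 2"
    by (simp_all add: phi_012 D_add D_diff D_Fp Fpp_012 alpha_eq_gen field_simps)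
  have "phi i = phi (i mod 3)" "phi (i + 1) = phi (i mod 3 + 1)" "phi (i + 2) = phi (i mod 3 + 2)"
      "alpha i = alpha (i mod 3)"
    by (rule phi_cong alpha_cong; metis mod_add_left_eq mod_mod_trivial)+
  then show ?thesis
    by (cases i rule: mod3_cases) (simp_all add: D_phi_012 index_mod3_numerals)
qed

lemma phi_nonzero: "phi i \<noteq> 0"
proof
  assume "phi i = 0"
  then have "alpha i = 0" using D_phi[of i] by simp
  then show False using alpha_nonzero by simp
qed

definition reflected_tau :: "nat \<Rightarrow> L" where
  "reflected_tau i = (taup (i + 1) * tau (i + 2) - tau (i + 1) * taup (i + 2) + xL * tau (i + 1) * tau (i + 2))
     / tau i"

lemma reflected_tau_eq: "reflected_tau i = tau (i + 1) * tau (i + 2) * phi i / tau i"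
  using tau_nonzero[of i] tau_nonzero[of "i + 1"] tau_nonzero[of "i + 2"]
  by (simp add: reflected_tau_def phi_def field_simps)

lemma reflected_tau_nonzero: "reflected_tau i \<noteq> 0"
  by (simp add: reflected_tau_eq tau_nonzero phi_nonzero)

lemma D_reflected_tau: "D (reflected_tau i) = reflected_tau i * (Fp i + alpha i / phi i)"
proof -
  have nz: "tau i \<noteq> 0" "tau (i + 1) \<noteq> 0" "tau (i + 2) \<noteq> 0" "phi i \<noteq> 0"
    by (simp_all add: tau_nonzero phi_nonzero)
  have "D (tau (i + 1) * tau (i + 2) * phi i / tau i)
      = tau (i + 1) * tau (i + 2) * phi i / tau i
        * (Fp (i + 1) + Fp (i + 2) + D (phi i) / phi i - Fp i)"
    using nz unfolding D_divide D_mult D_tau Fp_def by (simp add: field_simps power2_eq_square)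
  then show ?thesis
    unfolding reflected_tau_eq D_phi phi_plus1_eq_Fp phi_plus2_eq_Fp
    using nz by (simp add: field_simps)
qed

section \<open>Differential algebra endomorphisms of L\<close>

locale alg_endo =
  fixes H :: "L \<Rightarrow> L"
  assumes hom_add: "H (a + b) = H a + H b"
    and hom_mult: "H (a * b) = H a * H b"
    and hom_cL: "H (cL c) = cL c"
begin

lemma hom_0: "H 0 = 0" using hom_cL[of 0] by simp
lemma hom_1: "H 1 = 1" using hom_cL[of 1] by simp
lemma hom_numeral: "H (numeral k) = numeral k" using hom_cL[of "numeral k"] by (simp add: cL_numeral)
lemma hom_of_nat: "H (of_nat k) = of_nat k" using hom_cL[of "of_nat k"] by (simp add: cL_of_nat)
lemma hom_of_int: "H (of_int k) = of_int k" using hom_cL[of "of_int k"] by (simp add: cL_of_int)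
lemma hom_minus: "H (- a) = - H a" using hom_add[of "- a" a] hom_0 by (simp add: eq_neg_iff_add_eq_0)
lemma hom_diff: "H (a - b) = H a - H b" using hom_add[of a "- b"] hom_minus[of b] by simp

lemma hom_nonzero: "a \<noteq> 0 \<Longrightarrow> H a \<noteq> 0"
  using hom_mult[of a "inverse a"] hom_1 by auto

lemma hom_inverse: "H (inverse a) = inverse (H a)"
proof (cases "a = 0")
  case False
  then have "H a * H (inverse a) = 1" using hom_mult[of a "inverse a"] hom_1 by simp
  then show ?thesis using hom_nonzero[OF False] by (simp add: field_simps inverse_eq_divide)
qed (simp add: hom_0)

lemma hom_divide: "H (a / b) = H a / H b"
  by (simp add: divide_inverse hom_mult hom_inverse)

lemma hom_power: "H (a ^ n) = H a ^ n"
  by (induct n) (simp_all add: hom_1 hom_mult)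

lemma hom_sum: "H (sum g A) = (\<Sum>x\<in>A. H (g x))"
  by (induct A rule: infinite_finite_induct) (simp_all add: hom_0 hom_add)

lemma hom_prod: "H (prod g A) = (\<Prod>x\<in>A. H (g x))"
  by (induct A rule: infinite_finite_induct) (simp_all add: hom_1 hom_mult)

lemma hom_peval: "H (peval \<sigma> p) = peval (\<lambda>v. H (\<sigma> v)) p"
  unfolding peval_eq_sum mono_eval_def by (simp add: hom_sum hom_mult hom_cL hom_prod hom_power)

lemma hom_toL: "H (toL p) = peval (\<lambda>v. H (gen v)) p"
  by (simp add: toL_eq_peval_gen hom_peval)

lemmas hom_simps = hom_add hom_mult hom_cL hom_0 hom_1 hom_numeral hom_of_int hom_minus hom_diff
  hom_divide hom_power hom_inverse

end

lemma alg_endo_id: "alg_endo id"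
  by unfold_locales simp_all

lemma alg_endo_comp: "alg_endo F \<Longrightarrow> alg_endo G \<Longrightarrow> alg_endo (F \<circ> G)"
  by (unfold_locales) (simp_all add: alg_endo.hom_add alg_endo.hom_mult alg_endo.hom_cL)

lemma alg_endo_funpow: "alg_endo F \<Longrightarrow> alg_endo (F ^^ n)"
  by (induct n) (simp_all add: alg_endo_comp alg_endo_id)

lemma alg_endo_eqI:
  assumes "alg_endo F" "alg_endo G" "\<And>v. F (gen v) = G (gen v)"
  shows "F = G"
proof
  fix f
  obtain a b where "f = toL a / toL b" by (rule toL_divide_cases)
  then show "F f = G f"
    using assms by (simp add: alg_endo.hom_divide alg_endo.hom_toL)
qed

definition commutes_D :: "(L \<Rightarrow> L) \<Rightarrow> bool" where
  "commutes_D H \<longleftrightarrow> (\<forall>f. H (D f) = D (H f))"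

lemma commutes_D_id: "commutes_D id"
  by (simp add: commutes_D_def)

lemma commutes_D_comp: "commutes_D F \<Longrightarrow> commutes_D G \<Longrightarrow> commutes_D (F \<circ> G)"
  by (simp add: commutes_D_def)

lemma D_prod_power:
  "finite A \<Longrightarrow> D (\<Prod>w\<in>A. g w ^ e w) =
     (\<Sum>v\<in>A. of_nat (e v) * (\<Prod>w\<in>A. g w ^ (if w = v then e w - 1 else e w)) * D (g v))"
proof (induct A rule: finite_induct)
  case (insert a A)
  have "(\<Prod>w\<in>A. g w ^ (if w = a then e w - 1 else e w)) = (\<Prod>w\<in>A. g w ^ e w)"
    using insert(2) by (intro prod.cong) auto
  then have drop_a: "(\<Prod>w\<in>insert a A. g w ^ (if w = a then e w - 1 else e w))
      = g a ^ (e a - 1) * (\<Prod>w\<in>A. g w ^ e w)"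
    by (simp add: prod.insert[OF insert(1,2)])
  have keep_a: "v \<in> A \<Longrightarrow> (\<Prod>w\<in>insert a A. g w ^ (if w = v then e w - 1 else e w))
      = g a ^ e a * (\<Prod>w\<in>A. g w ^ (if w = v then e w - 1 else e w))" for v
    using insert by (auto simp: prod.insert)
  have "D (\<Prod>w\<in>insert a A. g w ^ e w)
      = D (g a ^ e a) * (\<Prod>w\<in>A. g w ^ e w) + g a ^ e a * D (\<Prod>w\<in>A. g w ^ e w)"
    using insert by (simp add: D_mult)
  also have "\<dots> = of_nat (e a) * (\<Prod>w\<in>insert a A. g w ^ (if w = a then e w - 1 else e w)) * D (g a)
     + (\<Sum>v\<in>A. of_nat (e v) * (\<Prod>w\<in>insert a A. g w ^ (if w = v then e w - 1 else e w)) * D (g v))"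
    unfolding insert(3) D_power drop_a by (simp add: sum_distrib_left keep_a algebra_simps cong: sum.cong)
  also have "\<dots> = (\<Sum>v\<in>insert a A. of_nat (e v) * (\<Prod>w\<in>insert a A. g w ^ (if w = v then e w - 1 else e w)) * D (g v))"
    using insert by simp
  finally show ?case .
qed simp

lemma commutes_D_intro:
  assumes H: "alg_endo H" and gen: "\<And>v. H (dgen v) = D (H (gen v))"
  shows "commutes_D H"
proof -
  interpret alg_endo H by (fact H)
  have mono: "H (mono_deriv m) = D (mono_eval (\<lambda>v. H (gen v)) m)" for m
    unfolding mono_deriv_def mono_eval_def D_prod_power[OF finite_UNIV]
    by (simp add: hom_sum hom_mult hom_prod hom_power gen hom_of_nat)
  have poly: "H (pder p) = D (H (toL p))" for p
    by (induct p rule: poly_mapping_single_induct)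
       (simp_all add: toL_0 hom_0 pder_single toL_single hom_mult hom_cL mono D_mult mono_eval_def
         hom_prod hom_power pder_add toL_add hom_add D_add)
  show ?thesis unfolding commutes_D_def
  proof
    fix f
    obtain a b where ab: "b \<noteq> 0" "f = toL a / toL b" by (rule toL_divide_cases)
    show "H (D f) = D (H f)" unfolding ab(2) D_toL_divide[OF ab(1)]
      by (simp add: hom_divide hom_diff hom_mult hom_power poly D_divide)
  qed
qed

lemma commutes_D_intro_tau:
  assumes "alg_endo H"
    and "D (H (alpha 0)) = 0" "D (H (alpha 1)) = 0" "D (H xL) = 1"
    and "\<And>k. k < 3 \<Longrightarrow> D (H (tau k)) = H (taup k)"
    and "\<And>k. k < 3 \<Longrightarrow> D (H (taup k)) = H (tau k * (Fpp k + (Fp k)^2))"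
  shows "commutes_D H"
proof (rule commutes_D_intro[OF assms(1)])
  have gen: "gen Al0 = alpha 0" "gen Al1 = alpha 1" "gen Xv = xL"
    "gen T0 = tau 0" "gen T1 = tau 1" "gen T2 = tau 2"
    "gen U0 = taup 0" "gen U1 = taup 1" "gen U2 = taup 2"
    by (simp_all add: alpha_def xL_def tau_def taup_def)
  fix v show "H (dgen v) = D (H (gen v))"
    using assms(2-4) assms(5)[of 0] assms(5)[of 1] assms(5)[of 2] assms(6)[of 0] assms(6)[of 1]
      assms(6)[of 2] alg_endo.hom_0[OF assms(1)] alg_endo.hom_1[OF assms(1)]
    by (cases v) (simp_all add: gen)
qed

lemma diff_endo_eqI:
  assumes "alg_endo F" "alg_endo G" "commutes_D F" "commutes_D G"
    "F (alpha 0) = G (alpha 0)" "F (alpha 1) = G (alpha 1)" "F xL = G xL"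
    "F (tau 0) = G (tau 0)" "F (tau 1) = G (tau 1)" "F (tau 2) = G (tau 2)"
  shows "F = G"
proof (rule alg_endo_eqI[OF assms(1,2)])
  have gen: "gen Al0 = alpha 0" "gen Al1 = alpha 1" "gen Xv = xL"
    "gen T0 = tau 0" "gen T1 = tau 1" "gen T2 = tau 2"
    "gen U0 = D (tau 0)" "gen U1 = D (tau 1)" "gen U2 = D (tau 2)"
    by (simp_all only: D_tau) (simp_all add: alpha_def xL_def tau_def taup_def)
  fix v show "F (gen v) = G (gen v)"
    using assms(3-) unfolding commutes_D_def by (cases v) (simp_all add: gen)
qed

section \<open>Substitutions\<close>

text \<open>A substitution \<open>\<rho>\<close> of the nine generators need not define a map on all of L; it does
  on the fractions having a representative whose denominator \<open>\<rho>\<close> does not kill. This partial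
  evaluation is what proves that \<^const>\<open>fsubst\<close> is a homomorphism when its substitution
  is invertible, without knowing that in advance.\<close>

definition subst_dom :: "(var \<Rightarrow> L) \<Rightarrow> L set" where
  "subst_dom \<rho> = {f. \<exists>a b. b \<noteq> 0 \<and> peval \<rho> b \<noteq> 0 \<and> f = toL a / toL b}"

definition subst_val :: "(var \<Rightarrow> L) \<Rightarrow> L \<Rightarrow> L" where
  "subst_val \<rho> f = (case SOME (a, b). b \<noteq> 0 \<and> peval \<rho> b \<noteq> 0 \<and> f = toL a / toL b of
     (a, b) \<Rightarrow> peval \<rho> a / peval \<rho> b)"

lemma subst_val_toL_divide:
  assumes "b \<noteq> 0" "peval \<rho> b \<noteq> 0"
  shows "subst_val \<rho> (toL a / toL b) = peval \<rho> a / peval \<rho> b"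
proof -
  let ?P = "\<lambda>(a', b'). b' \<noteq> 0 \<and> peval \<rho> b' \<noteq> 0 \<and> toL a / toL b = toL a' / toL b'"
  obtain a' b' where r: "(SOME x. ?P x) = (a', b')" by (cases "SOME x. ?P x")
  have "?P (a, b)" using assms by simp
  then have "?P (SOME x. ?P x)" by (rule someI)
  then have b': "b' \<noteq> 0" "peval \<rho> b' \<noteq> 0" and eq: "toL a / toL b = toL a' / toL b'"
    using r by auto
  have "toL (a * b') = toL (a' * b)"
    using eq b'(1) assms(1) by (simp add: toL_mult toL_eq_0_iff field_simps)
  then have "peval \<rho> a * peval \<rho> b' = peval \<rho> a' * peval \<rho> b"
    by (metis toL_inj peval_mult)
  then have "peval \<rho> a / peval \<rho> b = peval \<rho> a' / peval \<rho> b'"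
    using assms b' by (simp add: field_simps)
  then show ?thesis unfolding subst_val_def using r by simp
qed

lemma subst_dom_toL_divide: "b \<noteq> 0 \<Longrightarrow> peval \<rho> b \<noteq> 0 \<Longrightarrow> toL a / toL b \<in> subst_dom \<rho>"
  unfolding subst_dom_def by blast

lemma subst_domE:
  assumes "f \<in> subst_dom \<rho>"
  obtains a b where "b \<noteq> 0" "peval \<rho> b \<noteq> 0" "f = toL a / toL b"
  using assms unfolding subst_dom_def by blast

lemma subst_add:
  assumes "f \<in> subst_dom \<rho>" "g \<in> subst_dom \<rho>"
  shows "f + g \<in> subst_dom \<rho> \<and> subst_val \<rho> (f + g) = subst_val \<rho> f + subst_val \<rho> g"
proof -
  obtain a b where ab: "b \<noteq> 0" "peval \<rho> b \<noteq> 0" "f = toL a / toL b" using assms(1) by (rule subst_domE)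
  obtain c d where cd: "d \<noteq> 0" "peval \<rho> d \<noteq> 0" "g = toL c / toL d" using assms(2) by (rule subst_domE)
  have "f + g = toL (a * d + c * b) / toL (b * d)"
    using ab cd by (simp add: toL_add toL_mult toL_eq_0_iff field_simps)
  then show ?thesis
    using ab cd by (simp add: subst_dom_toL_divide subst_val_toL_divide peval_add peval_mult field_simps)
qed

lemma subst_mult:
  assumes "f \<in> subst_dom \<rho>" "g \<in> subst_dom \<rho>"
  shows "f * g \<in> subst_dom \<rho> \<and> subst_val \<rho> (f * g) = subst_val \<rho> f * subst_val \<rho> g"
proof -
  obtain a b where ab: "b \<noteq> 0" "peval \<rho> b \<noteq> 0" "f = toL a / toL b" using assms(1) by (rule subst_domE)
  obtain c d where cd: "d \<noteq> 0" "peval \<rho> d \<noteq> 0" "g = toL c / toL d" using assms(2) by (rule subst_domE)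
  have "f * g = toL (a * c) / toL (b * d)"
    using ab cd by (simp add: toL_mult)
  then show ?thesis
    using ab cd by (simp add: subst_dom_toL_divide subst_val_toL_divide peval_mult)
qed

lemma subst_minus:
  assumes "f \<in> subst_dom \<rho>"
  shows "- f \<in> subst_dom \<rho> \<and> subst_val \<rho> (- f) = - subst_val \<rho> f"
proof -
  obtain a b where ab: "b \<noteq> 0" "peval \<rho> b \<noteq> 0" "f = toL a / toL b" using assms by (rule subst_domE)
  then have "- f = toL (- a) / toL b" by (simp add: toL_minus)
  then show ?thesis using ab by (simp add: subst_dom_toL_divide subst_val_toL_divide peval_minus)
qed

lemma subst_divide:
  assumes "f \<in> subst_dom \<rho>" "g \<in> subst_dom \<rho>" "subst_val \<rho> g \<noteq> 0"
  shows "f / g \<in> subst_dom \<rho> \<and> subst_val \<rho> (f / g) = subst_val \<rho> f / subst_val \<rho> g"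
proof -
  obtain a b where ab: "b \<noteq> 0" "peval \<rho> b \<noteq> 0" "f = toL a / toL b" using assms(1) by (rule subst_domE)
  obtain c d where cd: "d \<noteq> 0" "peval \<rho> d \<noteq> 0" "g = toL c / toL d" using assms(2) by (rule subst_domE)
  have pc: "peval \<rho> c \<noteq> 0" using assms(3) cd by (simp add: subst_val_toL_divide)
  then have c: "c \<noteq> 0" by auto
  have nz: "toL b \<noteq> 0" "toL c \<noteq> 0" "toL d \<noteq> 0"
    using ab cd c by (simp_all add: toL_eq_0_iff)
  have "f / g = toL (a * d) / toL (b * c)"
    unfolding ab(3) cd(3) using nz by (simp add: toL_mult field_simps)
  moreover have "b * c \<noteq> 0" "peval \<rho> (b * c) \<noteq> 0" using ab c pc by (simp_all add: peval_mult)
  ultimately show ?thesis using ab cd pc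
    by (simp add: subst_dom_toL_divide subst_val_toL_divide peval_mult field_simps)
qed

lemma subst_toL: "toL p \<in> subst_dom \<rho> \<and> subst_val \<rho> (toL p) = peval \<rho> p"
  using subst_dom_toL_divide[of 1 \<rho> p] subst_val_toL_divide[of 1 \<rho> p] by (simp add: toL_1)

lemma subst_cL: "cL c \<in> subst_dom \<rho> \<and> subst_val \<rho> (cL c) = cL c"
  using subst_toL[of "Poly_Mapping.single 0 c" \<rho>] by (simp add: toL_const peval_single)

lemma subst_numeral: "numeral k \<in> subst_dom \<rho> \<and> subst_val \<rho> (numeral k) = numeral k"
  using subst_cL[of "numeral k" \<rho>] by (simp add: cL_numeral)

lemma subst_gen: "gen v \<in> subst_dom \<rho> \<and> subst_val \<rho> (gen v) = \<rho> v"
  using subst_toL[of "var_poly v" \<rho>] by (simp add: gen_eq_toL peval_var_poly)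

lemma subst_diff:
  assumes "f \<in> subst_dom \<rho>" "g \<in> subst_dom \<rho>"
  shows "f - g \<in> subst_dom \<rho> \<and> subst_val \<rho> (f - g) = subst_val \<rho> f - subst_val \<rho> g"
  using subst_add[OF assms(1) conjunct1[OF subst_minus[OF assms(2)]]] subst_minus[OF assms(2)] by simp

lemma subst_power:
  assumes "f \<in> subst_dom \<rho>"
  shows "f ^ n \<in> subst_dom \<rho> \<and> subst_val \<rho> (f ^ n) = subst_val \<rho> f ^ n"
  by (induct n) (use subst_cL[of 1 \<rho>] subst_mult[OF assms] in simp_all)

lemmas subst_dom_intros =
  subst_add[THEN conjunct1] subst_mult[THEN conjunct1] subst_minus[THEN conjunct1]
  subst_diff[THEN conjunct1] subst_divide[THEN conjunct1] subst_power[THEN conjunct1]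
  subst_numeral[THEN conjunct1] subst_gen[THEN conjunct1]

lemmas subst_val_simps =
  subst_add[THEN conjunct2] subst_mult[THEN conjunct2] subst_minus[THEN conjunct2]
  subst_diff[THEN conjunct2] subst_divide[THEN conjunct2] subst_power[THEN conjunct2]
  subst_numeral[THEN conjunct2] subst_gen[THEN conjunct2]

lemma subst_peval:
  assumes "\<And>v. \<sigma> v \<in> subst_dom \<rho>"
  shows "peval \<sigma> p \<in> subst_dom \<rho> \<and> subst_val \<rho> (peval \<sigma> p) = peval (\<lambda>v. subst_val \<rho> (\<sigma> v)) p"
proof -
  have sum: "(\<And>x. x \<in> A \<Longrightarrow> g x \<in> subst_dom \<rho>) \<Longrightarrow>
      sum g A \<in> subst_dom \<rho> \<and> subst_val \<rho> (sum g A) = (\<Sum>x\<in>A. subst_val \<rho> (g x))" for g A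
    by (induct A rule: infinite_finite_induct) (use subst_cL[of 0 \<rho>] subst_add in simp_all)
  have prod: "(\<And>x. x \<in> A \<Longrightarrow> g x \<in> subst_dom \<rho>) \<Longrightarrow>
      prod g A \<in> subst_dom \<rho> \<and> subst_val \<rho> (prod g A) = (\<Prod>x\<in>A. subst_val \<rho> (g x))" for g A
    by (induct A rule: infinite_finite_induct) (use subst_cL[of 1 \<rho>] subst_mult in simp_all)
  have mono: "mono_eval \<sigma> m \<in> subst_dom \<rho>
      \<and> subst_val \<rho> (mono_eval \<sigma> m) = mono_eval (\<lambda>v. subst_val \<rho> (\<sigma> v)) m" for m
    unfolding mono_eval_def using prod[of UNIV "\<lambda>v. \<sigma> v ^ Poly_Mapping.lookup m v"] subst_power[OF assms]
    by simp
  show ?thesis unfolding peval_eq_sum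
    using sum[of "Poly_Mapping.keys p" "\<lambda>m. cL (Poly_Mapping.lookup p m) * mono_eval \<sigma> m"]
      subst_mult[OF conjunct1[OF subst_cL] conjunct1[OF mono]] subst_cL mono
    by simp
qed

definition faithful :: "(var \<Rightarrow> L) \<Rightarrow> bool" where
  "faithful \<sigma> \<longleftrightarrow> (\<forall>b. b \<noteq> 0 \<longrightarrow> peval \<sigma> b \<noteq> 0)"

lemma faithfulI:
  assumes "\<And>v. \<sigma> v \<in> subst_dom \<rho>" "\<And>v. subst_val \<rho> (\<sigma> v) = gen v"
  shows "faithful \<sigma>"
  unfolding faithful_def
proof (intro allI impI)
  fix b :: mpoly
  assume "b \<noteq> 0"
  have "subst_val \<rho> (peval \<sigma> b) = toL b"
    using subst_peval[of \<sigma> \<rho> b] assms by (simp add: toL_eq_peval_gen)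
  with \<open>b \<noteq> 0\<close> have "subst_val \<rho> (peval \<sigma> b) \<noteq> 0" by (simp add: toL_eq_0_iff)
  then show "peval \<sigma> b \<noteq> 0" using subst_cL[of 0 \<rho>] by auto
qed

lemma fsubst_eq_subst_val:
  assumes "faithful \<sigma>"
  shows "fsubst \<sigma> f = subst_val \<sigma> f" and "f \<in> subst_dom \<sigma>"
proof -
  obtain a b where r: "rep f = (a, b)" by (cases "rep f")
  then have b: "b \<noteq> 0" and f: "f = toL a / toL b" by (auto dest: rep_toL_divide)
  have pb: "peval \<sigma> b \<noteq> 0" using assms b unfolding faithful_def by blast
  show "fsubst \<sigma> f = subst_val \<sigma> f" unfolding fsubst_def r using b pb f by (simp add: subst_val_toL_divide)
  show "f \<in> subst_dom \<sigma>" using b pb f by (simp add: subst_dom_toL_divide)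
qed

lemma alg_endo_fsubst: "faithful \<sigma> \<Longrightarrow> alg_endo (fsubst \<sigma>)"
  by unfold_locales (simp_all add: fsubst_eq_subst_val subst_add subst_mult subst_cL)

definition aut_subst :: "(nat \<Rightarrow> L) \<Rightarrow> (nat \<Rightarrow> L) \<Rightarrow> var \<Rightarrow> L" where
  "aut_subst a t = (\<lambda>v. case v of Al0 \<Rightarrow> a 0 | Al1 \<Rightarrow> a 1 | Xv \<Rightarrow> xL
      | T0 \<Rightarrow> t 0 | T1 \<Rightarrow> t 1 | T2 \<Rightarrow> t 2
      | U0 \<Rightarrow> D (t 0) | U1 \<Rightarrow> D (t 1) | U2 \<Rightarrow> D (t 2))"

lemma mk_aut_eq_fsubst: "mk_aut a t = fsubst (aut_subst a t)"
  unfolding mk_aut_def aut_subst_def ..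

definition period3 :: "(nat \<Rightarrow> L) \<Rightarrow> bool" where
  "period3 t \<longleftrightarrow> (\<forall>k. t k = t (k mod 3))"

lemma tau_eq_gen: "tau k = gen (if k mod 3 = 0 then T0 else if k mod 3 = 1 then T1 else T2)"
  by (simp add: tau_def)

lemma taup_eq_gen: "taup k = gen (if k mod 3 = 0 then U0 else if k mod 3 = 1 then U1 else U2)"
  by (simp add: taup_def)

lemma subst_dom_tau: "tau k \<in> subst_dom \<rho>"
  unfolding tau_eq_gen by (simp add: subst_gen)

lemma subst_dom_taup: "taup k \<in> subst_dom \<rho>"
  unfolding taup_eq_gen by (simp add: subst_gen)

lemma subst_dom_xL: "xL \<in> subst_dom \<rho>"
  unfolding xL_def by (simp add: subst_gen)

lemma subst_dom_alpha: "alpha k \<in> subst_dom \<rho>"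
  unfolding alpha_def by (simp add: subst_dom_intros)

lemma subst_val_aut_subst_tau:
  assumes "period3 t" shows "subst_val (aut_subst a t) (tau k) = t k"
proof -
  have "t k = t (k mod 3)" using assms by (simp add: period3_def)
  then show ?thesis
    unfolding tau_eq_gen by (cases k rule: mod3_cases) (simp_all add: subst_gen aut_subst_def)
qed

lemma subst_val_aut_subst_taup:
  assumes "period3 t" shows "subst_val (aut_subst a t) (taup k) = D (t k)"
proof -
  have "t k = t (k mod 3)" using assms by (simp add: period3_def)
  then show ?thesis
    unfolding taup_eq_gen by (cases k rule: mod3_cases) (simp_all add: subst_gen aut_subst_def)
qed

lemma subst_val_aut_subst_xL: "subst_val (aut_subst a t) xL = xL"
proof -
  have "subst_val (aut_subst a t) (gen Xv) = xL" by (simp add: subst_gen aut_subst_def)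
  then show ?thesis by (simp add: xL_def)
qed

lemma subst_val_aut_subst_alpha:
  assumes "period3 a" "a 2 = 3 - a 0 - a 1"
  shows "subst_val (aut_subst a t) (alpha k) = a k"
proof -
  have "a k = a (k mod 3)" using assms(1) by (simp add: period3_def)
  then show ?thesis using assms(2)
    by (cases k rule: mod3_cases)
       (simp_all add: alpha_def subst_gen aut_subst_def subst_dom_intros subst_val_simps)
qed

lemma subst_Fp:
  "subst_val \<rho> (tau k) \<noteq> 0 \<Longrightarrow>
     Fp k \<in> subst_dom \<rho> \<and> subst_val \<rho> (Fp k) = subst_val \<rho> (taup k) / subst_val \<rho> (tau k)"
  unfolding Fp_def by (simp add: subst_dom_tau subst_dom_taup subst_divide)

section \<open>The generators \<open>s\<^sub>i\<close> and \<open>\<pi>\<close> are differential automorphisms\<close>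

definition refl_alpha :: "nat \<Rightarrow> nat \<Rightarrow> L" where
  "refl_alpha i j = (if j mod 3 = i mod 3 then - alpha j else alpha j + alpha i)"

definition refl_tau :: "nat \<Rightarrow> nat \<Rightarrow> L" where
  "refl_tau i j = (if j mod 3 = i mod 3 then reflected_tau i else tau j)"

definition refl_subst :: "nat \<Rightarrow> var \<Rightarrow> L" where
  "refl_subst i = aut_subst (refl_alpha i) (refl_tau i)"

lemma s_eq_fsubst: "s i = fsubst (refl_subst i)"
  by (simp only: s_def mk_aut_eq_fsubst refl_subst_def)
     (simp only: refl_alpha_def[abs_def] refl_tau_def[abs_def] reflected_tau_def)

lemma period3_refl_tau: "period3 (refl_tau i)"
  unfolding period3_def refl_tau_def by (auto intro: tau_cong)

lemma period3_refl_alpha: "period3 (refl_alpha i)"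
  unfolding period3_def refl_alpha_def by (auto intro: alpha_cong)

lemma less3_cases: "(i::nat) < 3 \<Longrightarrow> i = 0 \<or> i = 1 \<or> i = 2"
  by auto

lemma refl_alpha_2: "i < 3 \<Longrightarrow> refl_alpha i 2 = 3 - refl_alpha i 0 - refl_alpha i 1"
  using alpha_sum by (auto dest!: less3_cases simp: refl_alpha_def algebra_simps)

lemma refl_tau_nonzero: "refl_tau i k \<noteq> 0"
  by (simp add: refl_tau_def reflected_tau_nonzero tau_nonzero)

context
  fixes i :: nat
  assumes i: "i < 3"
begin

abbreviation "S \<equiv> subst_val (refl_subst i)"

lemma S_tau: "S (tau k) = refl_tau i k"
  unfolding refl_subst_def by (rule subst_val_aut_subst_tau[OF period3_refl_tau])

lemma S_taup: "S (taup k) = D (refl_tau i k)"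
  unfolding refl_subst_def by (rule subst_val_aut_subst_taup[OF period3_refl_tau])

lemma S_alpha: "S (alpha k) = refl_alpha i k"
  unfolding refl_subst_def by (rule subst_val_aut_subst_alpha[OF period3_refl_alpha refl_alpha_2[OF i]])

lemma S_xL: "S xL = xL"
  unfolding refl_subst_def by (rule subst_val_aut_subst_xL)

lemma S_Fp:
  "Fp k \<in> subst_dom (refl_subst i)
    \<and> S (Fp k) = (if k mod 3 = i mod 3 then Fp i + alpha i / phi i else Fp k)"
proof -
  have "D (refl_tau i k)
      = (if k mod 3 = i mod 3 then reflected_tau i * (Fp i + alpha i / phi i) else taup k)"
    by (simp add: refl_tau_def D_reflected_tau D_tau)
  then show ?thesis
    using subst_Fp[of "refl_subst i" k] refl_tau_nonzero[of i k] reflected_tau_nonzero[of i]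
    by (simp add: S_tau S_taup) (simp add: refl_tau_def Fp_def)
qed

lemma S_phi: "phi i \<in> subst_dom (refl_subst i) \<and> S (phi i) = phi i"
proof -
  have "(i + 1) mod 3 \<noteq> i mod 3" "(i + 2) mod 3 \<noteq> i mod 3" by presburger+
  then show ?thesis unfolding phi_eq_Fp using S_Fp[of "i + 1"] S_Fp[of "i + 2"]
    by (simp add: subst_dom_intros subst_val_simps subst_dom_xL S_xL)
qed

text \<open>The partial evaluation of \<open>s\<^sub>i\<close> sends \<open>s\<^sub>i(\<tau>\<^sub>i)\<close> back to \<open>\<tau>\<^sub>i\<close>: the substitution
  inverts itself, which is what makes it faithful.\<close>

lemma S_reflected_tau: "reflected_tau i \<in> subst_dom (refl_subst i) \<and> S (reflected_tau i) = tau i"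
proof -
  have "(i + 1) mod 3 \<noteq> i mod 3" "(i + 2) mod 3 \<noteq> i mod 3" by presburger+
  then have S_taus: "S (tau (i + 1)) = tau (i + 1)" "S (tau (i + 2)) = tau (i + 2)"
      "S (tau i) = reflected_tau i"
    by (simp_all only: S_tau refl_tau_def if_True if_False refl)
  have num: "tau (i + 1) * tau (i + 2) * phi i \<in> subst_dom (refl_subst i)"
    by (intro subst_dom_intros subst_dom_tau S_phi[THEN conjunct1])
  have den: "S (tau i) \<noteq> 0" unfolding S_taus by (rule reflected_tau_nonzero)
  have "S (tau (i + 1) * tau (i + 2) * phi i / tau i) = S (tau (i + 1) * tau (i + 2) * phi i) / S (tau i)"
    by (rule subst_divide[OF num subst_dom_tau den, THEN conjunct2])
  also have "\<dots> = tau (i + 1) * tau (i + 2) * phi i / reflected_tau i"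
    by (simp only: subst_val_simps subst_dom_intros subst_dom_tau S_phi S_taus)
  also have "\<dots> = tau i"
    using tau_nonzero[of i] tau_nonzero[of "i + 1"] tau_nonzero[of "i + 2"] phi_nonzero[of i]
    by (simp add: reflected_tau_eq field_simps)
  finally show ?thesis
    unfolding reflected_tau_eq[of i] using subst_divide[OF num subst_dom_tau den] by simp
qed

lemma S_D_reflected_tau:
  "D (reflected_tau i) \<in> subst_dom (refl_subst i) \<and> S (D (reflected_tau i)) = taup i"
  unfolding D_reflected_tau using S_reflected_tau S_phi S_Fp[of i] phi_nonzero[of i]
  by (simp add: subst_dom_intros subst_val_simps subst_dom_alpha S_alpha)
     (simp add: refl_alpha_def Fp_def tau_nonzero field_simps)

lemma refl_subst_simps:
  "refl_subst i Al0 = refl_alpha i 0" "refl_subst i Al1 = refl_alpha i 1" "refl_subst i Xv = xL"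
  "refl_subst i T0 = refl_tau i 0" "refl_subst i T1 = refl_tau i 1" "refl_subst i T2 = refl_tau i 2"
  "refl_subst i U0 = D (refl_tau i 0)" "refl_subst i U1 = D (refl_tau i 1)"
  "refl_subst i U2 = D (refl_tau i 2)"
  by (simp_all add: refl_subst_def aut_subst_def)

lemma faithful_refl_subst: "faithful (refl_subst i)"
proof (rule faithfulI)
  fix v
  show "refl_subst i v \<in> subst_dom (refl_subst i)"
    using S_reflected_tau S_D_reflected_tau
    by (cases v) (simp_all only: refl_subst_simps,
        simp_all add: refl_alpha_def refl_tau_def D_tau subst_dom_alpha subst_dom_tau
          subst_dom_taup subst_dom_xL subst_dom_intros)
  have gen: "gen Al0 = alpha 0" "gen Al1 = alpha 1" "gen Xv = xL"
    "gen T0 = tau 0" "gen T1 = tau 1" "gen T2 = tau 2"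
    "gen U0 = taup 0" "gen U1 = taup 1" "gen U2 = taup 2"
    by (simp_all add: alpha_def xL_def tau_def taup_def)
  show "S (refl_subst i v) = gen v"
    using less3_cases[OF i] S_reflected_tau S_D_reflected_tau
    by (cases v; simp only: refl_subst_simps gen;
        auto simp: refl_alpha_def refl_tau_def subst_dom_alpha subst_dom_intros subst_val_simps
          S_alpha S_xL S_tau S_taup D_tau)
qed

lemma alg_endo_s: "alg_endo (s i)"
  unfolding s_eq_fsubst by (rule alg_endo_fsubst[OF faithful_refl_subst])

lemma s_eq_S: "s i f = S f"
  unfolding s_eq_fsubst by (rule fsubst_eq_subst_val(1)[OF faithful_refl_subst])

lemma s_tau: "s i (tau k) = refl_tau i k" by (simp add: s_eq_S S_tau)
lemma s_taup: "s i (taup k) = D (refl_tau i k)" by (simp add: s_eq_S S_taup)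
lemma s_alpha: "s i (alpha k) = refl_alpha i k" by (simp add: s_eq_S S_alpha)
lemma s_xL: "s i xL = xL" by (simp add: s_eq_S S_xL)
lemma s_Fp: "s i (Fp k) = (if k mod 3 = i mod 3 then Fp i + alpha i / phi i else Fp k)"
  by (simp add: s_eq_S S_Fp)
lemma s_reflected_tau: "s i (reflected_tau i) = tau i"
  by (simp add: s_eq_S S_reflected_tau)

end

lemma s_Fpp:
  assumes "i < 3" "k < 3"
  shows "s i (Fpp k) = Fpp k
    - (if k = i then alpha i * (phi (i + 2) - phi (i + 1)) / phi i + (alpha i / phi i)^2 else 0)"
proof -
  interpret alg_endo "s i" by (rule alg_endo_s[OF assms(1)])
  have "s i (Fpp k) = - s i xL * (s i (Fp (k + 1)) - s i (Fp (k + 2)))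
      - (s i (Fp k) - s i (Fp (k + 1))) * (s i (Fp k) - s i (Fp (k + 2)))
      - (s i (alpha (k + 1)) - s i (alpha (k + 2))) / 3"
    unfolding Fpp_def by (simp only: hom_simps)
  note s_Fpp_eq = this[unfolded s_Fp[OF assms(1)] s_alpha[OF assms(1)] s_xL[OF assms(1)]]
  have nz: "phi 0 \<noteq> 0" "phi 1 \<noteq> 0" "phi 2 \<noteq> 0" by (simp_all add: phi_nonzero)
  from less3_cases[OF assms(1)] less3_cases[OF assms(2)] show ?thesis
    unfolding s_Fpp_eq using nz
    by (elim disjE; simp add: Fpp_012 refl_alpha_def index_mod3_numerals alpha_2_eq field_simps;
        simp add: phi_012 algebra_simps power2_eq_square)
qed

lemma D_D_reflected_tau:
  "D (D (reflected_tau i)) = reflected_tau i * ((Fp i + alpha i / phi i)^2 + Fpp i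
     - alpha i * (phi i * (phi (i + 2) - phi (i + 1)) + alpha i) / (phi i)^2)"
  using phi_nonzero[of i] reflected_tau_nonzero[of i]
  by (simp add: D_reflected_tau D_mult D_add D_divide D_Fp D_phi field_simps power2_eq_square)

lemma commutes_D_s:
  assumes i: "i < 3" shows "commutes_D (s i)"
proof (rule commutes_D_intro_tau[OF alg_endo_s[OF i]])
  interpret alg_endo "s i" by (rule alg_endo_s[OF i])
  show "D (s i (alpha 0)) = 0" "D (s i (alpha 1)) = 0" "D (s i xL) = 1"
    by (simp_all add: s_alpha[OF i] s_xL[OF i] refl_alpha_def D_minus D_add)
  fix k :: nat assume k: "k < 3"
  show "D (s i (tau k)) = s i (taup k)" by (simp add: s_tau[OF i] s_taup[OF i])
  show "D (s i (taup k)) = s i (tau k * (Fpp k + (Fp k)^2))"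
  proof (cases "k = i")
    case True
    have "s i (tau i * (Fpp i + (Fp i)^2)) = reflected_tau i * (s i (Fpp i) + (Fp i + alpha i / phi i)^2)"
      by (simp add: hom_simps s_tau[OF i] s_Fp[OF i] refl_tau_def)
    also have "\<dots> = D (s i (taup i))"
      unfolding s_Fpp[OF i i] s_taup[OF i] using phi_nonzero[of i]
      by (simp add: refl_tau_def D_D_reflected_tau field_simps power2_eq_square)
    finally show ?thesis using True by simp
  next
    case False
    then have "k mod 3 \<noteq> i mod 3" using i k by simp
    then show ?thesis using False
      by (simp add: hom_simps s_tau[OF i] s_taup[OF i] s_Fp[OF i] s_Fpp[OF i k] refl_tau_def D_taup D_tau)
  qed
qed

definition shift_subst :: "nat \<Rightarrow> var \<Rightarrow> L" where
  "shift_subst c = aut_subst (\<lambda>j. alpha (j + c)) (\<lambda>j. tau (j + c))"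

lemma pi_eq_fsubst: "pi = fsubst (shift_subst 1)"
  by (simp only: pi_def mk_aut_eq_fsubst shift_subst_def)

lemma period3_shift: "period3 (\<lambda>j. tau (j + c))" "period3 (\<lambda>j. alpha (j + c))"
  unfolding period3_def by (auto intro: tau_cong alpha_cong simp: mod_add_left_eq)

lemma alpha_sum_shift: "alpha c + alpha (c + 1) + alpha (c + 2) = 3"
proof -
  have "alpha c = alpha (c mod 3)" "alpha (c + 1) = alpha (c mod 3 + 1)"
      "alpha (c + 2) = alpha (c mod 3 + 2)"
    by (rule alpha_cong; metis mod_add_left_eq mod_mod_trivial)+
  then show ?thesis
    using alpha_sum by (cases c rule: mod3_cases) (simp_all add: index_mod3_numerals algebra_simps)
qed

lemma subst_val_shift:
  "subst_val (shift_subst c) (tau k) = tau (k + c)" "subst_val (shift_subst c) (taup k) = taup (k + c)"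
  "subst_val (shift_subst c) (alpha k) = alpha (k + c)" "subst_val (shift_subst c) xL = xL"
proof -
  have "alpha (2 + c) = 3 - alpha (0 + c) - alpha (1 + c)"
    using alpha_sum_shift[of c] by (simp add: algebra_simps)
  then show
    "subst_val (shift_subst c) (tau k) = tau (k + c)" "subst_val (shift_subst c) (taup k) = taup (k + c)"
    "subst_val (shift_subst c) (alpha k) = alpha (k + c)" "subst_val (shift_subst c) xL = xL"
    by (simp_all add: shift_subst_def subst_val_aut_subst_tau subst_val_aut_subst_taup
        subst_val_aut_subst_alpha subst_val_aut_subst_xL period3_shift D_tau)
qed

lemma faithful_shift_subst_1: "faithful (shift_subst 1)"
proof (rule faithfulI)
  have shift_1: "shift_subst 1 Al0 = alpha 1" "shift_subst 1 Al1 = alpha 2" "shift_subst 1 Xv = xL"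
    "shift_subst 1 T0 = tau 1" "shift_subst 1 T1 = tau 2" "shift_subst 1 T2 = tau 0"
    "shift_subst 1 U0 = taup 1" "shift_subst 1 U1 = taup 2" "shift_subst 1 U2 = taup 0"
    by (simp_all add: shift_subst_def aut_subst_def D_tau index_mod3_numerals)
  have gen: "gen Al0 = alpha 0" "gen Al1 = alpha 1" "gen Xv = xL"
    "gen T0 = tau 0" "gen T1 = tau 1" "gen T2 = tau 2"
    "gen U0 = taup 0" "gen U1 = taup 1" "gen U2 = taup 2"
    by (simp_all add: alpha_def xL_def tau_def taup_def)
  fix v
  show "shift_subst 1 v \<in> subst_dom (shift_subst 2)"
    by (cases v) (simp_all add: shift_1 subst_dom_alpha subst_dom_tau subst_dom_taup subst_dom_xL)
  show "subst_val (shift_subst 2) (shift_subst 1 v) = gen v"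
    by (cases v) (simp_all only: shift_1 gen subst_val_shift, simp_all add: index_mod3_numerals)
qed

lemma alg_endo_pi: "alg_endo pi"
  unfolding pi_eq_fsubst by (rule alg_endo_fsubst[OF faithful_shift_subst_1])

lemma pi_simps:
  "pi (tau k) = tau (k + 1)" "pi (taup k) = taup (k + 1)" "pi (alpha k) = alpha (k + 1)" "pi xL = xL"
  unfolding pi_eq_fsubst fsubst_eq_subst_val(1)[OF faithful_shift_subst_1] by (rule subst_val_shift)+

lemma pi_Fp: "pi (Fp k) = Fp (k + 1)"
  by (simp add: Fp_def alg_endo.hom_divide[OF alg_endo_pi] pi_simps)

lemma pi_Fpp: "pi (Fpp k) = Fpp (k + 1)"
  unfolding Fpp_def by (simp add: alg_endo.hom_simps[OF alg_endo_pi] pi_Fp pi_simps)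

lemma pi_phi: "pi (phi k) = phi (k + 1)"
  unfolding phi_def by (simp add: alg_endo.hom_simps[OF alg_endo_pi] pi_simps)

lemma commutes_D_pi: "commutes_D pi"
proof (rule commutes_D_intro_tau[OF alg_endo_pi])
  show "D (pi (alpha 0)) = 0" "D (pi (alpha 1)) = 0" "D (pi xL) = 1"
    by (simp_all add: pi_simps)
  fix k
  show "D (pi (tau k)) = pi (taup k)" by (simp add: pi_simps D_tau)
  show "D (pi (taup k)) = pi (tau k * (Fpp k + (Fp k)^2))"
    by (simp add: alg_endo.hom_simps[OF alg_endo_pi] pi_simps pi_Fp pi_Fpp D_taup)
qed

section \<open>Relations of the extended affine Weyl group\<close>

interpretation s0: alg_endo "s 0" by (rule alg_endo_s) simp
interpretation s1: alg_endo "s 1" by (rule alg_endo_s) simp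
interpretation s2: alg_endo "s 2" by (rule alg_endo_s) simp
interpretation pi: alg_endo pi by (rule alg_endo_pi)

lemmas generator_hom_simps = s0.hom_simps s1.hom_simps s2.hom_simps pi.hom_simps

lemma s_tau_012:
  "s 0 (tau 0) = reflected_tau 0" "s 0 (tau 1) = tau 1" "s 0 (tau 2) = tau 2"
  "s 1 (tau 0) = tau 0" "s 1 (tau 1) = reflected_tau 1" "s 1 (tau 2) = tau 2"
  "s 2 (tau 0) = tau 0" "s 2 (tau 1) = tau 1" "s 2 (tau 2) = reflected_tau 2"
  by (simp_all add: s_tau refl_tau_def)

lemma s_alpha_012:
  "s 0 (alpha 0) = - alpha 0" "s 0 (alpha 1) = alpha 1 + alpha 0" "s 0 (alpha 2) = alpha 2 + alpha 0"
  "s 1 (alpha 0) = alpha 0 + alpha 1" "s 1 (alpha 1) = - alpha 1" "s 1 (alpha 2) = alpha 2 + alpha 1"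
  "s 2 (alpha 0) = alpha 0 + alpha 2" "s 2 (alpha 1) = alpha 1 + alpha 2" "s 2 (alpha 2) = - alpha 2"
  by (simp_all add: s_alpha refl_alpha_def)

lemma s_xL_012: "s 0 xL = xL" "s 1 xL = xL" "s 2 xL = xL"
  by (simp_all add: s_xL)

lemma pi_reflected_tau: "pi (reflected_tau i) = reflected_tau (i + 1)"
  by (simp add: reflected_tau_eq pi.hom_simps pi_simps pi_phi)

lemma pi_012:
  "pi (tau 0) = tau 1" "pi (tau 1) = tau 2" "pi (tau 2) = tau 0"
  "pi (alpha 0) = alpha 1" "pi (alpha 1) = alpha 2" "pi (alpha 2) = alpha 0"
  "pi (reflected_tau 0) = reflected_tau 1" "pi (reflected_tau 1) = reflected_tau 2"
  "pi (reflected_tau 2) = reflected_tau 0"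
proof -
  have "reflected_tau 3 = reflected_tau 0" by (simp add: reflected_tau_eq index_mod3_numerals)
  then show
    "pi (tau 0) = tau 1" "pi (tau 1) = tau 2" "pi (tau 2) = tau 0"
    "pi (alpha 0) = alpha 1" "pi (alpha 1) = alpha 2" "pi (alpha 2) = alpha 0"
    "pi (reflected_tau 0) = reflected_tau 1" "pi (reflected_tau 1) = reflected_tau 2"
    "pi (reflected_tau 2) = reflected_tau 0"
    by (simp_all add: pi_simps pi_reflected_tau index_mod3_numerals)
qed

lemmas generator_values = s_alpha_012 s_tau_012 s_xL_012 pi_012 pi_simps(4)

lemma s_phi:
  assumes "i < 3"
  shows "s i (phi i) = phi i" "s i (phi (i + 1)) = phi (i + 1) - alpha i / phi i"
    "s i (phi (i + 2)) = phi (i + 2) + alpha i / phi i"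
proof -
  interpret alg_endo "s i" by (rule alg_endo_s[OF assms])
  have mod3: "(i + 1) mod 3 \<noteq> i mod 3" "(i + 2) mod 3 \<noteq> i mod 3" by presburger+
  show "s i (phi i) = phi i"
    unfolding phi_eq_Fp[of i] using mod3 by (simp add: hom_simps s_xL[OF assms] s_Fp[OF assms])
  show "s i (phi (i + 1)) = phi (i + 1) - alpha i / phi i"
    unfolding phi_plus1_eq_Fp using mod3 by (simp add: hom_simps s_xL[OF assms] s_Fp[OF assms])
  show "s i (phi (i + 2)) = phi (i + 2) + alpha i / phi i"
    unfolding phi_plus2_eq_Fp using mod3 by (simp add: hom_simps s_xL[OF assms] s_Fp[OF assms])
qed

lemma s_phi_012:
  "s 0 (phi 0) = phi 0" "s 0 (phi 1) = phi 1 - alpha 0 / phi 0" "s 0 (phi 2) = phi 2 + alpha 0 / phi 0"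
  "s 1 (phi 1) = phi 1" "s 1 (phi 2) = phi 2 - alpha 1 / phi 1" "s 1 (phi 0) = phi 0 + alpha 1 / phi 1"
  "s 2 (phi 2) = phi 2" "s 2 (phi 0) = phi 0 - alpha 2 / phi 2" "s 2 (phi 1) = phi 1 + alpha 2 / phi 2"
  using s_phi[of 0] s_phi[of 1] s_phi[of 2] by (simp_all add: index_mod3_numerals)

lemma s_involution: "i < 3 \<Longrightarrow> s i \<circ> s i = id"
  by (rule diff_endo_eqI)
     (auto dest!: less3_cases simp: alg_endo_comp alg_endo_s commutes_D_comp commutes_D_s alg_endo_id
        commutes_D_id generator_values generator_hom_simps s_reflected_tau)

lemma s_s_apply: "i < 3 \<Longrightarrow> s i (s i f) = f"
  using s_involution[of i] by (metis comp_apply id_apply)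

lemma pi_s_commute: "pi \<circ> s 0 = s 1 \<circ> pi" "pi \<circ> s 1 = s 2 \<circ> pi" "pi \<circ> s 2 = s 0 \<circ> pi"
  by (rule diff_endo_eqI;
      simp add: alg_endo_comp alg_endo_s alg_endo_pi commutes_D_comp commutes_D_s commutes_D_pi
        generator_hom_simps generator_values)+

lemma pi_cube: "pi \<circ> pi \<circ> pi = id"
  by (rule diff_endo_eqI)
     (simp_all add: alg_endo_comp alg_endo_pi alg_endo_id commutes_D_comp commutes_D_pi commutes_D_id
        generator_hom_simps generator_values)

lemma braid_identity_tau0:
  fixes t0 t1 t2 p0 p1 a0 a1 q :: "'a::field"
  assumes "t0 \<noteq> 0" "t1 \<noteq> 0" "t2 \<noteq> 0" "p0 \<noteq> 0" "p1 \<noteq> 0" "q \<noteq> 0" and q: "q * p0 = p1 * p0 - a0"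
  shows "(t2 * (t1 * t2 * p0 / t0) * q / t1) * t2 * (p0 + (a1 + a0) / q) / (t1 * t2 * p0 / t0)
       = (t2 * t0 * p1 / t1) * t2 * (p0 + a1 / p1) / t0"
proof -
  have "(t2 * (t1 * t2 * p0 / t0) * q / t1) * t2 * (p0 + (a1 + a0) / q) / (t1 * t2 * p0 / t0)
      = t2 * t2 * (q * p0 + (a1 + a0)) / t1"
    using assms by (simp add: field_simps)
  also have "\<dots> = t2 * t2 * (p1 * p0 + a1) / t1" unfolding q by (simp add: algebra_simps)
  also have "\<dots> = (t2 * t0 * p1 / t1) * t2 * (p0 + a1 / p1) / t0" using assms by (simp add: field_simps)
  finally show ?thesis .
qed

lemma braid_identity_tau1:
  fixes t0 t1 t2 p0 p1 a0 a1 r :: "'a::field"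
  assumes "t0 \<noteq> 0" "t1 \<noteq> 0" "t2 \<noteq> 0" "p0 \<noteq> 0" "p1 \<noteq> 0" "r \<noteq> 0" and r: "r * p1 = p0 * p1 + a1"
  shows "t2 * (t1 * t2 * p0 / t0) * (p1 - a0 / p0) / t1
       = t2 * ((t2 * t0 * p1 / t1) * t2 * r / t0) * (p1 - (a0 + a1) / r) / (t2 * t0 * p1 / t1)"
proof -
  have "t2 * ((t2 * t0 * p1 / t1) * t2 * r / t0) * (p1 - (a0 + a1) / r) / (t2 * t0 * p1 / t1)
      = t2 * t2 * (r * p1 - (a0 + a1)) / t0"
    using assms by (simp add: field_simps)
  also have "\<dots> = t2 * t2 * (p0 * p1 - a0) / t0" unfolding r by (simp add: algebra_simps)
  also have "\<dots> = t2 * (t1 * t2 * p0 / t0) * (p1 - a0 / p0) / t1" using assms by (simp add: field_simps)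
  finally show ?thesis by simp
qed

lemma reflected_tau_012:
  "reflected_tau 0 = tau 1 * tau 2 * phi 0 / tau 0" "reflected_tau 1 = tau 2 * tau 0 * phi 1 / tau 1"
  "reflected_tau 2 = tau 0 * tau 1 * phi 2 / tau 2"
  by (simp_all add: reflected_tau_eq index_mod3_numerals)

lemma braid: "s 0 \<circ> s 1 \<circ> s 0 = s 1 \<circ> s 0 \<circ> s 1"
proof (rule diff_endo_eqI)
  show "alg_endo (s 0 \<circ> s 1 \<circ> s 0)" "alg_endo (s 1 \<circ> s 0 \<circ> s 1)"
    "commutes_D (s 0 \<circ> s 1 \<circ> s 0)" "commutes_D (s 1 \<circ> s 0 \<circ> s 1)"
    by (simp_all add: alg_endo_comp alg_endo_s commutes_D_comp commutes_D_s)
  show "(s 0 \<circ> s 1 \<circ> s 0) (alpha 0) = (s 1 \<circ> s 0 \<circ> s 1) (alpha 0)"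
    "(s 0 \<circ> s 1 \<circ> s 0) (alpha 1) = (s 1 \<circ> s 0 \<circ> s 1) (alpha 1)"
    "(s 0 \<circ> s 1 \<circ> s 0) xL = (s 1 \<circ> s 0 \<circ> s 1) xL"
    "(s 0 \<circ> s 1 \<circ> s 0) (tau 2) = (s 1 \<circ> s 0 \<circ> s 1) (tau 2)"
    by (simp_all add: generator_hom_simps generator_values)
  have nz: "tau 0 \<noteq> 0" "tau 1 \<noteq> 0" "tau 2 \<noteq> 0" "phi 0 \<noteq> 0" "phi 1 \<noteq> 0"
    by (simp_all add: tau_nonzero phi_nonzero)
  have s1_refl0: "s 1 (reflected_tau 0) = reflected_tau 1 * tau 2 * (phi 0 + alpha 1 / phi 1) / tau 0"
    unfolding reflected_tau_012(1) by (simp add: generator_hom_simps generator_values s_phi_012)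
  have s0_refl1: "s 0 (reflected_tau 1) = tau 2 * reflected_tau 0 * (phi 1 - alpha 0 / phi 0) / tau 1"
    unfolding reflected_tau_012(2) by (simp add: generator_hom_simps generator_values s_phi_012)
  have s0_phi1: "phi 1 - alpha 0 / phi 0 \<noteq> 0"
    using s0.hom_nonzero[OF phi_nonzero[of 1]] by (simp add: s_phi_012)
  have s1_phi0: "phi 0 + alpha 1 / phi 1 \<noteq> 0"
    using s1.hom_nonzero[OF phi_nonzero[of 0]] by (simp add: s_phi_012)
  have L0: "(s 0 \<circ> s 1 \<circ> s 0) (tau 0)
      = s 0 (reflected_tau 1) * tau 2 * (phi 0 + (alpha 1 + alpha 0) / (phi 1 - alpha 0 / phi 0))
        / reflected_tau 0"
    by (simp add: generator_values s1_refl0 generator_hom_simps s_phi_012)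
  have R0: "(s 1 \<circ> s 0 \<circ> s 1) (tau 0) = reflected_tau 1 * tau 2 * (phi 0 + alpha 1 / phi 1) / tau 0"
    by (simp add: generator_values s1_refl0)
  show "(s 0 \<circ> s 1 \<circ> s 0) (tau 0) = (s 1 \<circ> s 0 \<circ> s 1) (tau 0)"
    unfolding L0 R0 s0_refl1 unfolding reflected_tau_012
    by (rule braid_identity_tau0[OF nz s0_phi1]) (use nz(4) in \<open>simp add: field_simps\<close>)
  have L1: "(s 0 \<circ> s 1 \<circ> s 0) (tau 1) = tau 2 * reflected_tau 0 * (phi 1 - alpha 0 / phi 0) / tau 1"
    by (simp add: generator_values s0_refl1)
  have R1: "(s 1 \<circ> s 0 \<circ> s 1) (tau 1)
      = tau 2 * s 1 (reflected_tau 0) * (phi 1 - (alpha 0 + alpha 1) / (phi 0 + alpha 1 / phi 1))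
        / reflected_tau 1"
    by (simp add: generator_values s0_refl1 generator_hom_simps s_phi_012)
  show "(s 0 \<circ> s 1 \<circ> s 0) (tau 1) = (s 1 \<circ> s 0 \<circ> s 1) (tau 1)"
    unfolding L1 R1 s1_refl0 unfolding reflected_tau_012
    by (rule braid_identity_tau1[OF nz s1_phi0]) (use nz(5) in \<open>simp add: field_simps\<close>)
qed

section \<open>The translations \<open>T\<^sub>1\<close>, \<open>T\<^sub>2\<close> and the tau functions\<close>

locale inverse_pair =
  fixes f g :: "L \<Rightarrow> L"
  assumes left_inverse: "\<And>x. g (f x) = x" and right_inverse: "\<And>x. f (g x) = x"
begin

lemma zpow_eq: "zpow f k = (if 0 \<le> k then f ^^ nat k else g ^^ nat (- k))"
proof -
  have "inv f = g"
    by (rule inv_unique_comp) (simp_all add: fun_eq_iff left_inverse right_inverse)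
  then show ?thesis by (simp add: zpow_def)
qed

lemma zpow_add1_right: "zpow f (k + 1) x = zpow f k (f x)"
proof -
  consider "0 \<le> k" | "k = -1" | "k < -1" by linarith
  then show ?thesis
  proof cases
    case 1
    then have "nat (k + 1) = Suc (nat k)" by simp
    then show ?thesis using 1 by (simp add: zpow_eq funpow_Suc_right del: funpow.simps)
  next
    case 3
    then have "nat (- k) = Suc (nat (- (k + 1)))" by simp
    then show ?thesis using 3 by (simp add: zpow_eq funpow_Suc_right left_inverse del: funpow.simps)
  qed (simp add: zpow_eq left_inverse)
qed

lemma zpow_add1_left: "zpow f (k + 1) x = f (zpow f k x)"
proof -
  consider "0 \<le> k" | "k = -1" | "k < -1" by linarith
  then show ?thesis
  proof cases
    case 1
    then have "nat (k + 1) = Suc (nat k)" by simp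
    then show ?thesis using 1 by (simp add: zpow_eq)
  next
    case 3
    then have "nat (- k) = Suc (nat (- (k + 1)))" by simp
    then show ?thesis using 3 by (simp add: zpow_eq right_inverse)
  qed (simp add: zpow_eq right_inverse)
qed

lemma zpow_inverse_right: "zpow f k (g x) = zpow f (k - 1) x"
  using zpow_add1_right[of "k - 1" "g x"] by (simp add: right_inverse)

lemma zpow_commute:
  assumes "\<And>x. f (h x) = h (f x)" "\<And>x. g (h x) = h (g x)"
  shows "zpow f k (h x) = h (zpow f k x)"
proof -
  have "(F ^^ n) (h x) = h ((F ^^ n) x)" if "\<And>x. F (h x) = h (F x)" for F n
    by (induct n) (simp_all add: that)
  then show ?thesis using assms by (simp add: zpow_eq)
qed

lemma alg_endo_zpow: "alg_endo f \<Longrightarrow> alg_endo g \<Longrightarrow> alg_endo (zpow f k)"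
  by (simp add: zpow_eq alg_endo_funpow)

lemma zpow_translation:
  assumes "alg_endo f" "f y = y + of_int d"
  shows "zpow f k y = y + of_int k * of_int d"
proof (induct k rule: int_induct[where k = 0])
  case base then show ?case by (simp add: zpow_eq)
next
  case (step1 i)
  have "zpow f (i + 1) y = f (y + of_int i * of_int d)" by (simp add: zpow_add1_left step1)
  also have "\<dots> = y + of_int (i + 1) * of_int d"
    using assms by (simp add: alg_endo.hom_simps[OF assms(1)] algebra_simps)
  finally show ?case .
next
  case (step2 i)
  have "f (zpow f (i - 1) y) = y + of_int i * of_int d"
    using zpow_add1_left[of "i - 1" y] step2 by simp
  also have "\<dots> = f (y + of_int (i - 1) * of_int d)"
    using assms by (simp add: alg_endo.hom_simps[OF assms(1)] algebra_simps)
  finally show ?case by (metis left_inverse)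
qed

end

lemma s_s_012: "s 0 (s 0 x) = x" "s 1 (s 1 x) = x" "s 2 (s 2 x) = x"
  by (simp_all add: s_s_apply)

lemma pi_s_commute_apply: "pi (s 0 x) = s 1 (pi x)" "pi (s 1 x) = s 2 (pi x)" "pi (s 2 x) = s 0 (pi x)"
  using pi_s_commute by (metis comp_apply)+

lemma pi_cube_apply: "pi (pi (pi x)) = x"
  using pi_cube by (metis comp_apply id_apply)

lemma braid_apply: "s 1 (s 0 (s 1 x)) = s 0 (s 1 (s 0 x))"
  using braid by (metis comp_apply)

definition Tr1_inv :: "L \<Rightarrow> L" where "Tr1_inv = s 1 \<circ> s 2 \<circ> pi \<circ> pi"
definition Tr2_inv :: "L \<Rightarrow> L" where "Tr2_inv = s 2 \<circ> pi \<circ> pi \<circ> s 1"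

lemma inverse_pair_Tr1: "inverse_pair Tr1 Tr1_inv"
  by unfold_locales (simp_all add: Tr1_def Tr1_inv_def s_s_012 pi_cube_apply)

lemma inverse_pair_Tr2: "inverse_pair Tr2 Tr2_inv"
  by unfold_locales (simp_all add: Tr2_def Tr2_inv_def s_s_012 pi_cube_apply)

interpretation T1: inverse_pair Tr1 Tr1_inv by (rule inverse_pair_Tr1)
interpretation T2: inverse_pair Tr2 Tr2_inv by (rule inverse_pair_Tr2)

lemma Tr1_Tr2_commute: "Tr1 (Tr2 x) = Tr2 (Tr1 x)"
  by (simp add: Tr1_def Tr2_def pi_s_commute_apply s_s_012 braid_apply)

lemma Tr1_inv_Tr2_commute: "Tr1_inv (Tr2 x) = Tr2 (Tr1_inv x)"
  by (metis Tr1_Tr2_commute T1.left_inverse T1.right_inverse)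

lemma Tr2_inv_Tr1_commute: "Tr2_inv (Tr1 x) = Tr1 (Tr2_inv x)"
  by (metis Tr1_Tr2_commute T2.left_inverse T2.right_inverse)

lemma Tr1_inv_Tr2_inv_commute: "Tr2_inv (Tr1_inv x) = Tr1_inv (Tr2_inv x)"
  by (metis Tr1_inv_Tr2_commute T2.left_inverse T2.right_inverse)

lemma alg_endo_Tr: "alg_endo Tr1" "alg_endo Tr2" "alg_endo Tr1_inv" "alg_endo Tr2_inv"
  unfolding Tr1_def Tr2_def Tr1_inv_def Tr2_inv_def
  by (intro alg_endo_comp alg_endo_pi alg_endo_s; simp)+

lemma wmn_apply: "wmn m n x = zpow Tr1 m (zpow Tr2 n x)"
  by (simp add: wmn_def)

lemma alg_endo_wmn: "alg_endo (wmn m n)"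
  unfolding wmn_def
  by (intro alg_endo_comp T1.alg_endo_zpow T2.alg_endo_zpow alg_endo_Tr)

lemma wmn_Tr1: "wmn m n (Tr1 x) = wmn (m + 1) n x"
  by (simp add: wmn_apply T2.zpow_commute Tr1_Tr2_commute Tr2_inv_Tr1_commute T1.zpow_add1_right)

lemma wmn_Tr2: "wmn m n (Tr2 x) = wmn m (n + 1) x"
  by (simp add: wmn_apply T2.zpow_add1_right)

lemma wmn_Tr1_inv: "wmn m n (Tr1_inv x) = wmn (m - 1) n x"
  by (simp add: wmn_apply T2.zpow_commute Tr1_inv_Tr2_commute Tr1_inv_Tr2_inv_commute
      T1.zpow_inverse_right)

lemma wmn_Tr2_inv: "wmn m n (Tr2_inv x) = wmn m (n - 1) x"
  by (simp add: wmn_apply T2.zpow_inverse_right)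

lemma tau_as_translates:
  "tau 1 = Tr1 (tau 0)" "tau 2 = Tr1 (Tr2 (tau 0))"
  "reflected_tau 0 = Tr1 (Tr1 (Tr2 (tau 0)))" "reflected_tau 1 = Tr2 (tau 0)"
  "reflected_tau 2 = Tr2_inv (tau 0)"
  "s 1 (reflected_tau 0) = Tr2 (Tr1 (Tr2 (tau 0)))" "s 1 (reflected_tau 2) = Tr1_inv (tau 0)"
proof -
  have tau2: "tau 2 = Tr1 (Tr2 (tau 0))"
    by (simp add: Tr1_Tr2_commute) (simp add: Tr1_def Tr2_def generator_values)
  then show "tau 2 = Tr1 (Tr2 (tau 0))" .
  show "tau 1 = Tr1 (tau 0)" "reflected_tau 1 = Tr2 (tau 0)" "reflected_tau 2 = Tr2_inv (tau 0)"
    "s 1 (reflected_tau 2) = Tr1_inv (tau 0)"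
    by (simp_all add: Tr1_def Tr2_def Tr2_inv_def Tr1_inv_def generator_values)
  show "reflected_tau 0 = Tr1 (Tr1 (Tr2 (tau 0)))" "s 1 (reflected_tau 0) = Tr2 (Tr1 (Tr2 (tau 0)))"
    unfolding tau2[symmetric] by (simp_all add: Tr1_def Tr2_def generator_values)
qed

lemma wmn_tau_reflected_tau:
  "wmn m n (tau 0) = taumn m n" "wmn m n (tau 1) = taumn (m + 1) n"
  "wmn m n (tau 2) = taumn (m + 1) (n + 1)"
  "wmn m n (reflected_tau 0) = taumn (m + 2) (n + 1)" "wmn m n (reflected_tau 1) = taumn m (n + 1)"
  "wmn m n (reflected_tau 2) = taumn m (n - 1)"
  "wmn m n (s 1 (reflected_tau 0)) = taumn (m + 1) (n + 2)"
  "wmn m n (s 1 (reflected_tau 2)) = taumn (m - 1) n"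
  unfolding tau_as_translates(6,7) unfolding tau_as_translates(1-5) taumn_def
  by (simp_all add: wmn_Tr1 wmn_Tr2 wmn_Tr1_inv wmn_Tr2_inv ac_simps)

lemma phi_eq_reflected_tau:
  "phi 0 = reflected_tau 0 * tau 0 / (tau 1 * tau 2)" "phi 1 = reflected_tau 1 * tau 1 / (tau 2 * tau 0)"
  "phi 2 = reflected_tau 2 * tau 2 / (tau 0 * tau 1)"
  using tau_nonzero[of 0] tau_nonzero[of 1] tau_nonzero[of 2]
  by (simp_all add: reflected_tau_012 field_simps)

lemma s1_phi_eq_reflected_tau:
  "s 1 (phi 0) = s 1 (reflected_tau 0) * tau 0 / (reflected_tau 1 * tau 2)"
  "s 1 (phi 1) = tau 1 * reflected_tau 1 / (tau 2 * tau 0)"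
  "s 1 (phi 2) = s 1 (reflected_tau 2) * tau 2 / (tau 0 * reflected_tau 1)"
proof -
  have "s 1 (reflected_tau 1) = tau 1" by (simp add: s_reflected_tau)
  then show
    "s 1 (phi 0) = s 1 (reflected_tau 0) * tau 0 / (reflected_tau 1 * tau 2)"
    "s 1 (phi 1) = tau 1 * reflected_tau 1 / (tau 2 * tau 0)"
    "s 1 (phi 2) = s 1 (reflected_tau 2) * tau 2 / (tau 0 * reflected_tau 1)"
    unfolding phi_eq_reflected_tau by (simp_all add: generator_hom_simps generator_values)
qed

lemma wmn_alpha:
  "wmn m n (alpha 0) = alpha 0 + 3 * of_int m"
  "wmn m n (alpha 1) = alpha 1 + 3 * of_int (n - m)"
  "wmn m n (alpha 2) = alpha 2 - 3 * of_int n"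
proof -
  have Tr_alpha:
    "Tr1 (alpha 0) = alpha 0 + of_int 3" "Tr1 (alpha 1) = alpha 1 + of_int (-3)"
    "Tr1 (alpha 2) = alpha 2 + of_int 0"
    "Tr2 (alpha 0) = alpha 0 + of_int 0" "Tr2 (alpha 1) = alpha 1 + of_int 3"
    "Tr2 (alpha 2) = alpha 2 + of_int (-3)"
    by (simp_all add: Tr1_def Tr2_def generator_hom_simps generator_values alpha_2_eq algebra_simps)
  have "zpow Tr1 k (alpha 0) = alpha 0 + 3 * of_int k"
    "zpow Tr1 k (alpha 1) = alpha 1 - 3 * of_int k"
    "zpow Tr1 k (alpha 2) = alpha 2"
    "zpow Tr2 k (alpha 0) = alpha 0"
    "zpow Tr2 k (alpha 1) = alpha 1 + 3 * of_int k"
    "zpow Tr2 k (alpha 2) = alpha 2 - 3 * of_int k" for k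
    using T1.zpow_translation[OF alg_endo_Tr(1) Tr_alpha(1), of k]
      T1.zpow_translation[OF alg_endo_Tr(1) Tr_alpha(2), of k]
      T1.zpow_translation[OF alg_endo_Tr(1) Tr_alpha(3), of k]
      T2.zpow_translation[OF alg_endo_Tr(2) Tr_alpha(4), of k]
      T2.zpow_translation[OF alg_endo_Tr(2) Tr_alpha(5), of k]
      T2.zpow_translation[OF alg_endo_Tr(2) Tr_alpha(6), of k]
    by (simp_all add: algebra_simps)
  note zpow_alpha = this
  interpret T1m: alg_endo "zpow Tr1 m" by (intro T1.alg_endo_zpow alg_endo_Tr)
  show
    "wmn m n (alpha 0) = alpha 0 + 3 * of_int m"
    "wmn m n (alpha 1) = alpha 1 + 3 * of_int (n - m)"
    "wmn m n (alpha 2) = alpha 2 - 3 * of_int n"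
    by (simp_all add: wmn_apply T1m.hom_simps zpow_alpha algebra_simps)
qed

theorem proposition4p1:
  fixes m n :: int
  defines "w \<equiv> wmn m n" and "w' \<equiv> wmn m n \<circ> s 1"
  shows "(w (tau 0), w (tau 1), w (tau 2)) = (taumn m n, taumn (m+1) n, taumn (m+1) (n+1))
    \<and> (w (alpha 0), w (alpha 1), w (alpha 2))
        = (alpha 0 + 3 * of_int m, alpha 1 + 3 * of_int (n - m), alpha 2 - 3 * of_int n)
    \<and> (w' (tau 0), w' (tau 1), w' (tau 2)) = (taumn m n, taumn m (n+1), taumn (m+1) (n+1))
    \<and> (w' (alpha 0), w' (alpha 1), w' (alpha 2))
        = (alpha 0 + alpha 1 + 3 * of_int n, - alpha 1 + 3 * of_int (m - n),
           alpha 1 + alpha 2 - 3 * of_int m)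
    \<and> (w (phi 0), w (phi 1), w (phi 2))
        = (taumn m n * taumn (m+2) (n+1) / (taumn (m+1) n * taumn (m+1) (n+1)),
           taumn (m+1) n * taumn m (n+1) / (taumn (m+1) (n+1) * taumn m n),
           taumn (m+1) (n+1) * taumn m (n-1) / (taumn m n * taumn (m+1) n))
    \<and> (w' (phi 0), w' (phi 1), w' (phi 2))
        = (taumn m n * taumn (m+1) (n+2) / (taumn m (n+1) * taumn (m+1) (n+1)),
           taumn m (n+1) * taumn (m+1) n / (taumn (m+1) (n+1) * taumn m n),
           taumn (m+1) (n+1) * taumn (m-1) n / (taumn m n * taumn m (n+1)))"
proof -
  interpret w: alg_endo "wmn m n" by (rule alg_endo_wmn)
  show ?thesis
    unfolding w_def w'_def comp_apply phi_eq_reflected_tau s1_phi_eq_reflected_tau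
    by (simp add: w.hom_simps wmn_tau_reflected_tau wmn_alpha generator_values generator_hom_simps
        s_reflected_tau algebra_simps)
qed

end
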